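(* Let $a<0<b$, $T>0$, and let $W$ be a standard one-dimensional Wiener process with $W(0)=0$. For $h\in(0,1)$ set $\delta=\delta(h)=\sqrt{4h\log(h^{-1})}$ and $\Delta t(x)=h$ if $d(x,\{a,b\})>\delta$, $\Delta t(x)=h^2$ otherwise. Define $t_0=0$, $t_{n+1}=t_n+\Delta t(W(t_n))$, the piecewise constant process $\overline W(t)=W(t_n)$ for $t\in[t_n,t_{n+1})$, the numerical exit time $\nu=\min\{t_n: W(t_n)\notin(a,b)\}\wedge T$, and $\mathrm{Cost}(\overline W)=\int_0^\nu\frac{1}{\Delta t(\overline W(t))}\,\mathrm{d}t$. Let $M_W(t)=\sup_{r\in[0,t]}W(r)$ and, for $m\ge0$, $w\le m$, $t>0$, \[ \rho_t(w,m)=\sqrt{\tfrac{2}{\pi}}\,\frac{2m-w}{t^{3/2}}\exp\!\Big(-\frac{(2m-w)^2}{2t}\Big), \] the joint density of $(W(t),M_W(t))$. Then for all sufficiently small $h>0$, \[ \sup_{(t,w,m)\in[h,T]\times[b-\delta,b)\times[b-\delta,b+\delta]}\rho_t(w,m)<\infty, \] and $\mathbb{E}[\mathrm{Cost}(\overline W)]=\mathcal O(h^{-1}|\log h|)$ as $h\to0$.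
   Context: $d(x,\{a,b\})=\min(|x-a|,|x-b|)$. The scheme above is the order 1 adaptive method specialized to $\mathrm{d}X=\mathrm{d}W$ on the domain $D=(a,b)$, for which the numerical solution coincides with $W$ at the mesh points $t_n$ (each $t_n$ being a stopping time). *)

theory Defs
  imports "HOL-Probability.Probability" "HOL-Library.Landau_Symbols"
begin

definition wiener_process :: "'a measure \<Rightarrow> (real \<Rightarrow> 'a \<Rightarrow> real) \<Rightarrow> bool" where
  "wiener_process M W \<longleftrightarrow>
     prob_space M \<and>
     (\<forall>t\<ge>0. W t \<in> borel_measurable M) \<and>
     (\<forall>\<omega>\<in>space M. W 0 \<omega> = 0) \<and>
     (\<forall>\<omega>\<in>space M. continuous_on {0..} (\<lambda>t. W t \<omega>)) \<and>
     (\<forall>s t. 0 \<le> s \<and> s < t \<longrightarrow>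
        distributed M lborel (\<lambda>\<omega>. W t \<omega> - W s \<omega>)
          (\<lambda>x. ennreal (normal_density 0 (sqrt (t - s)) x))) \<and>
     (\<forall>(ts :: nat \<Rightarrow> real) n. 0 \<le> ts 0 \<and> (\<forall>i<n. ts i < ts (Suc i)) \<longrightarrow>
        prob_space.indep_vars M (\<lambda>_. borel) (\<lambda>i \<omega>. W (ts (Suc i)) \<omega> - W (ts i) \<omega>) {..<n})"

definition delta :: "real \<Rightarrow> real" where
  "delta h = sqrt (4 * h * ln (1 / h))"

definition dist_bd :: "real \<Rightarrow> real \<Rightarrow> real \<Rightarrow> real" where
  "dist_bd a b x = min \<bar>x - a\<bar> \<bar>x - b\<bar>"

definition step :: "real \<Rightarrow> real \<Rightarrow> real \<Rightarrow> real \<Rightarrow> real" where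
  "step a b h x = (if dist_bd a b x > delta h then h else h\<^sup>2)"

primrec tmesh :: "real \<Rightarrow> real \<Rightarrow> (real \<Rightarrow> 'a \<Rightarrow> real) \<Rightarrow> real \<Rightarrow> 'a \<Rightarrow> nat \<Rightarrow> real" where
  "tmesh a b W h \<omega> 0 = 0"
| "tmesh a b W h \<omega> (Suc n) =
     tmesh a b W h \<omega> n + step a b h (W (tmesh a b W h \<omega> n) \<omega>)"

definition Wbar :: "real \<Rightarrow> real \<Rightarrow> (real \<Rightarrow> 'a \<Rightarrow> real) \<Rightarrow> real \<Rightarrow> real \<Rightarrow> 'a \<Rightarrow> real" where
  "Wbar a b W h t \<omega> =
     W (tmesh a b W h \<omega> (THE n. tmesh a b W h \<omega> n \<le> t \<and> t < tmesh a b W h \<omega> (Suc n))) \<omega>"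

definition nu :: "real \<Rightarrow> real \<Rightarrow> real \<Rightarrow> (real \<Rightarrow> 'a \<Rightarrow> real) \<Rightarrow> real \<Rightarrow> 'a \<Rightarrow> real" where
  "nu a b T W h \<omega> =
     (if \<exists>n. W (tmesh a b W h \<omega> n) \<omega> \<notin> {a<..<b}
      then min (Min {tmesh a b W h \<omega> n | n. W (tmesh a b W h \<omega> n) \<omega> \<notin> {a<..<b}
                       \<and> (\<forall>k<n. W (tmesh a b W h \<omega> k) \<omega> \<in> {a<..<b})}) T
      else T)"

definition cost :: "real \<Rightarrow> real \<Rightarrow> real \<Rightarrow> (real \<Rightarrow> 'a \<Rightarrow> real) \<Rightarrow> real \<Rightarrow> 'a \<Rightarrow> real" where
  "cost a b T W h \<omega> =
     (LINT t:{0..nu a b T W h \<omega>}|lborel. 1 / step a b h (Wbar a b W h t \<omega>))"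

definition rho :: "real \<Rightarrow> real \<Rightarrow> real \<Rightarrow> real" where
  "rho t w m = (if 0 \<le> m \<and> w \<le> m then
      sqrt (2 / pi) * (2 * m - w) / t powr (3/2) * exp (- ((2 * m - w)\<^sup>2) / (2 * t))
    else 0)"

end

theory Submission
  imports Defs
begin

text \<open>
  Steps of size \<open>h\<close> cost \<open>1/h\<close> each and there are at most about \<open>T/h\<close> of them
  before time \<open>T\<close>. The small steps are controlled by a Lyapunov argument: the penalty
  \<open>\<phi>(x) = min ((a + 2\<delta> - x)\<^sub>+\<^sup>2) (9\<delta>\<^sup>2) + min ((x - b + 2\<delta>)\<^sub>+\<^sup>2) (9\<delta>\<^sup>2)\<close> is bounded by \<open>18\<delta>\<^sup>2\<close>,
  and while the walk is alive each step near the boundary increases its expectation by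
  the variance \<open>h\<^sup>2\<close> of the increment, up to the contribution of increments larger
  than \<open>\<delta>\<close>, which the choice of \<open>\<delta>\<close> makes of order \<open>\<delta>\<^sup>2 h\<^sup>2\<close>. Hence the expected number of
  small steps is \<open>O(\<delta>\<^sup>2/h\<^sup>2) = O(h\<^sup>-\<^sup>1 |log h|)\<close>. The expectations of the increments are
  computed by conditioning on the finitely many possible step-size patterns, for each of
  which the mesh is deterministic and the increments of \<open>W\<close> are independent.
  The bound on the density \<open>\<rho>\<^sub>t(w, m)\<close> is elementary, since \<open>t \<ge> h\<close> and
  \<open>0 \<le> 2m - w \<le> b + 3\<delta>\<close> on the region considered.
\<close>

section \<open>Gaussian estimates\<close>

definition normal_expectation :: "real \<Rightarrow> (real \<Rightarrow> real) \<Rightarrow> real" where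
  "normal_expectation s G = (\<integral>y. normal_density 0 (sqrt s) y * G y \<partial>lborel)"

lemma
  assumes "0 < s"
  shows integrable_normal_first_moment: "integrable lborel (\<lambda>y. normal_density 0 (sqrt s) y * y)"
    and normal_expectation_id: "normal_expectation s (\<lambda>y. y) = 0"
  using integrable_normal_moment_nz_1[of "sqrt s" 0] integral_normal_moment_nz_1[of "sqrt s" 0] assms
  by (auto simp: normal_expectation_def)

lemma
  assumes "0 < s"
  shows integrable_normal_second_moment: "integrable lborel (\<lambda>y. normal_density 0 (sqrt s) y * y\<^sup>2)"
    and normal_expectation_power2: "normal_expectation s (\<lambda>y. y\<^sup>2) = s"
  using integrable_normal_moment[of "sqrt s" 0 2] integral_normal_moment_even[of "sqrt s" 0 1] assms
  by (auto simp: normal_expectation_def power2_eq_square)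

lemma normal_density_mult_exp:
  assumes "0 < \<sigma>"
  shows "normal_density 0 \<sigma> y * exp (\<mu> * y) = exp (\<mu>\<^sup>2 * \<sigma>\<^sup>2 / 2) * normal_density (\<mu> * \<sigma>\<^sup>2) \<sigma> y"
proof -
  have "- (y - 0)\<^sup>2 / (2 * \<sigma>\<^sup>2) + \<mu> * y = \<mu>\<^sup>2 * \<sigma>\<^sup>2 / 2 + (- (y - \<mu> * \<sigma>\<^sup>2)\<^sup>2 / (2 * \<sigma>\<^sup>2))"
    using assms by (simp add: field_simps power2_eq_square)
  then show ?thesis
    unfolding normal_density_def by (simp add: exp_add[symmetric] mult.commute mult.left_commute)
qed

lemma
  assumes "0 < \<sigma>"
  shows integrable_normal_density_mult_exp:
      "integrable lborel (\<lambda>y. normal_density 0 \<sigma> y * exp (\<mu> * y))"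
    and integral_normal_density_mult_exp:
      "(\<integral>y. normal_density 0 \<sigma> y * exp (\<mu> * y) \<partial>lborel) = exp (\<mu>\<^sup>2 * \<sigma>\<^sup>2 / 2)"
  unfolding normal_density_mult_exp[OF assms]
  using integrable_normal_density[OF assms, of "\<mu> * \<sigma>\<^sup>2"] integral_normal_density[OF assms, of "\<mu> * \<sigma>\<^sup>2"]
  by auto

lemma power2_le_4_exp:
  fixes x :: real
  assumes "0 \<le> x"
  shows "x\<^sup>2 \<le> 4 * exp x"
proof -
  have "1 + x/2 \<le> exp (x/2)" by (rule exp_ge_add_one_self)
  hence "(1 + x/2)\<^sup>2 \<le> (exp (x/2))\<^sup>2" using assms by (intro power_mono) auto
  also have "(exp (x/2))\<^sup>2 = exp x" by (simp add: power2_eq_square exp_add[symmetric])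
  finally have "(1 + x/2)\<^sup>2 \<le> exp x" .
  moreover have "x\<^sup>2 \<le> 4 * (1 + x/2)\<^sup>2" using assms by (simp add: power2_eq_square algebra_simps)
  ultimately show ?thesis by linarith
qed

text \<open>The exponential tilt \<open>r/s\<close> is chosen so that the Gaussian integral of the majorant
  reproduces the factor \<open>exp (- r\<^sup>2 / (2 s))\<close>.\<close>

lemma tail_square_le_exp_sum:
  fixes r s y :: real
  assumes "0 < s" "0 < r" "s \<le> r\<^sup>2"
  shows "y\<^sup>2 * indicator {y. r < \<bar>y\<bar>} y
    \<le> 4 * r\<^sup>2 * exp (-(r/s - 1/r) * r) * (exp ((r/s) * y) + exp (- (r/s) * y))"
proof (cases "r < \<bar>y\<bar>")
  case True
  have "0 \<le> r/s - 1/r" using assms by (simp add: field_simps power2_eq_square)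
  then have "0 \<le> (r/s - 1/r) * (\<bar>y\<bar> - r)" using True by simp
  have "(\<bar>y\<bar>/r)\<^sup>2 \<le> 4 * exp (\<bar>y\<bar>/r)" using assms by (intro power2_le_4_exp) auto
  hence "y\<^sup>2 \<le> 4 * r\<^sup>2 * exp (\<bar>y\<bar>/r)" using assms by (simp add: field_simps power2_eq_square)
  also have "exp (\<bar>y\<bar>/r) \<le> exp (\<bar>y\<bar>/r) * exp ((r/s - 1/r) * (\<bar>y\<bar> - r))"
    using \<open>0 \<le> (r/s - 1/r) * (\<bar>y\<bar> - r)\<close> by (simp add: one_le_exp_iff)
  also have "\<dots> = exp (-(r/s - 1/r) * r) * exp ((r/s) * \<bar>y\<bar>)"
    unfolding exp_add[symmetric] using assms by (intro arg_cong[where f=exp]) (simp add: field_simps)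
  also have "exp ((r/s) * \<bar>y\<bar>) \<le> exp ((r/s) * y) + exp (- (r/s) * y)"
    by (cases "0 \<le> y") (auto simp: add_increasing2 add_increasing)
  finally show ?thesis
    using True by (simp add: mult_left_mono mult.assoc)
qed (simp add: indicator_def)

lemma
  fixes r s :: real
  assumes "0 < s" "0 < r" "s \<le> r\<^sup>2"
  shows integrable_normal_tail_square:
      "integrable lborel (\<lambda>y. normal_density 0 (sqrt s) y * (y\<^sup>2 * indicator {y. r < \<bar>y\<bar>} y))"
    and integral_normal_tail_square_le:
      "(\<integral>y. normal_density 0 (sqrt s) y * (y\<^sup>2 * indicator {y. r < \<bar>y\<bar>} y) \<partial>lborel)
         \<le> 8 * exp 1 * r\<^sup>2 * exp (- r\<^sup>2 / (2 * s))"
proof -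
  let ?C = "4 * r\<^sup>2 * exp (-(r/s - 1/r) * r)"
  let ?e = "\<lambda>\<mu> y. normal_density 0 (sqrt s) y * exp (\<mu> * y)"
  let ?g = "\<lambda>y. ?C * ?e (r/s) y + ?C * ?e (-(r/s)) y"
  have sq: "0 < sqrt s" using assms by simp
  have ig: "integrable lborel ?g"
    using integrable_normal_density_mult_exp[OF sq] by (intro Bochner_Integration.integrable_add integrable_mult_right)
  have "integral\<^sup>L lborel ?g = ?C * integral\<^sup>L lborel (?e (r/s)) + ?C * integral\<^sup>L lborel (?e (-(r/s)))"
    using integrable_normal_density_mult_exp[OF sq]
    by (simp only: Bochner_Integration.integral_add integrable_mult_right integral_mult_right_zero)
  also have "\<dots> = ?C * (2 * exp ((r/s)\<^sup>2 * s / 2))"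
    using assms by (simp only: integral_normal_density_mult_exp[OF sq]) simp
  also have "\<dots> = 8 * exp 1 * r\<^sup>2 * exp (- r\<^sup>2 / (2 * s))"
  proof -
    have "-(r/s - 1/r) * r + (r/s)\<^sup>2 * s / 2 = 1 + (- r\<^sup>2 / (2 * s))"
      using assms by (simp add: field_simps power2_eq_square)
    hence "exp (-(r/s - 1/r) * r) * exp ((r/s)\<^sup>2 * s / 2) = exp 1 * exp (- r\<^sup>2 / (2 * s))"
      by (simp add: exp_add[symmetric])
    thus ?thesis by (simp add: algebra_simps)
  qed
  finally have ig_val: "integral\<^sup>L lborel ?g = 8 * exp 1 * r\<^sup>2 * exp (- r\<^sup>2 / (2 * s))" .
  have bound: "norm (normal_density 0 (sqrt s) y * (y\<^sup>2 * indicator {y. r < \<bar>y\<bar>} y)) \<le> ?g y" for y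
    using mult_left_mono[OF tail_square_le_exp_sum[OF assms, of y], of "normal_density 0 (sqrt s) y"]
    by (simp add: abs_mult algebra_simps)
  show int: "integrable lborel (\<lambda>y. normal_density 0 (sqrt s) y * (y\<^sup>2 * indicator {y. r < \<bar>y\<bar>} y))"
    by (rule Bochner_Integration.integrable_bound[OF ig]) (use bound in auto)
  show "(\<integral>y. normal_density 0 (sqrt s) y * (y\<^sup>2 * indicator {y. r < \<bar>y\<bar>} y) \<partial>lborel)
          \<le> 8 * exp 1 * r\<^sup>2 * exp (- r\<^sup>2 / (2 * s))"
    unfolding ig_val[symmetric] by (rule integral_mono[OF int ig]) (use bound in auto)
qed

lemma clipped_square_step:
  fixes u y d :: real
  assumes "u < 2*d" "0 < d"
  shows "(max 0 u)\<^sup>2 + 2 * max 0 u * y + (if d \<le> u \<and> \<bar>y\<bar> \<le> d then y\<^sup>2 else 0)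
           - 9 * (if d < \<bar>y\<bar> then y\<^sup>2 else 0)
         \<le> min ((max 0 (u + y))\<^sup>2) (9 * d\<^sup>2)"
proof -
  have convex: "(max 0 u)\<^sup>2 + 2 * max 0 u * y \<le> (max 0 (u + y))\<^sup>2"
  proof (cases "0 \<le> u")
    case True
    show ?thesis
    proof (cases "0 \<le> u + y")
      case False
      then have "u * (u + 2 * y) \<le> 0" using \<open>0 \<le> u\<close> by (intro mult_nonneg_nonpos) auto
      then show ?thesis using False \<open>0 \<le> u\<close> by (simp add: power2_eq_square algebra_simps)
    qed (use True in \<open>simp add: power2_eq_square algebra_simps\<close>)
  qed simp
  have exact: "d \<le> u \<Longrightarrow> \<bar>y\<bar> \<le> d \<Longrightarrow> (max 0 u)\<^sup>2 + 2 * max 0 u * y + y\<^sup>2 = (max 0 (u + y))\<^sup>2"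
    by (simp add: power2_eq_square algebra_simps)
  show ?thesis
  proof (cases "9 * d\<^sup>2 < (max 0 (u + y))\<^sup>2")
    case True
    then have "(3 * d)\<^sup>2 < (max 0 (u + y))\<^sup>2" by (simp add: power2_eq_square)
    then have "3 * d < max 0 (u + y)" using assms by (smt (verit) power_mono)
    then have y: "d < y" "(max 0 (u + y))\<^sup>2 \<le> 9 * y\<^sup>2"
      using assms power_mono[of "max 0 (u + y)" "3 * y" 2] by (auto simp: power2_eq_square)
    have "(max 0 u)\<^sup>2 + 2 * max 0 u * y - 9 * y\<^sup>2 \<le> 9 * d\<^sup>2"
      using convex y zero_le_power2[of d] by linarith
    then show ?thesis using y True by (auto simp: min_def)
  next
    case False
    have "(max 0 u)\<^sup>2 + 2 * max 0 u * y - 9 * y\<^sup>2 \<le> (max 0 (u + y))\<^sup>2"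
      and "(max 0 u)\<^sup>2 + 2 * max 0 u * y + y\<^sup>2 - 9 * y\<^sup>2 \<le> (max 0 (u + y))\<^sup>2"
      using convex zero_le_power2[of y] by linarith+
    then show ?thesis using convex exact False by (auto simp: min_def)
  qed
qed

lemma measure_Icc_inter_Ico:
  fixes c d u :: real
  assumes "0 \<le> c" "c \<le> d" "0 \<le> u"
  shows "measure lborel ({0..u} \<inter> {c..<d}) = max 0 (min u d - c)"
proof -
  consider "u < c" | "c \<le> u" "u < d" | "d \<le> u" by linarith
  then show ?thesis
  proof cases
    case 1
    then have "{0..u} \<inter> {c..<d} = {}" by auto
    then show ?thesis using 1 by simp
  next
    case 2
    then have "{0..u} \<inter> {c..<d} = {c..u}" using assms by auto
    then show ?thesis using 2 by simp
  next
    case 3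
    then have "{0..u} \<inter> {c..<d} = {c..<d}" using assms by auto
    then show ?thesis using 3 assms by simp
  qed
qed

section \<open>Wiener process at deterministic times\<close>

locale wiener_space =
  fixes M :: "'a measure" and W :: "real \<Rightarrow> 'a \<Rightarrow> real"
  assumes wiener: "wiener_process M W"
begin

sublocale prob_space M
  using wiener unfolding wiener_process_def by auto

lemma integrable_bounded:
  fixes f :: "'a \<Rightarrow> real"
  shows "f \<in> borel_measurable M \<Longrightarrow> (\<And>\<omega>. \<omega> \<in> space M \<Longrightarrow> \<bar>f \<omega>\<bar> \<le> B) \<Longrightarrow> integrable M f"
  by (rule integrable_const_bound[where B=B]) auto

lemma W_measurable: "0 \<le> c \<Longrightarrow> W c \<in> borel_measurable M"
  using wiener unfolding wiener_process_def by auto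

lemma W_0: "\<omega> \<in> space M \<Longrightarrow> W 0 \<omega> = 0"
  using wiener unfolding wiener_process_def by auto

lemma W_increment_distributed:
  "0 \<le> s \<Longrightarrow> s < u \<Longrightarrow>
   distributed M lborel (\<lambda>\<omega>. W u \<omega> - W s \<omega>) (\<lambda>x. ennreal (normal_density 0 (sqrt (u - s)) x))"
  using wiener unfolding wiener_process_def by auto

lemma W_increments_indep:
  "0 \<le> ts 0 \<Longrightarrow> (\<And>i. i < n \<Longrightarrow> ts i < ts (Suc i)) \<Longrightarrow>
   indep_vars (\<lambda>_. borel) (\<lambda>i \<omega>. W (ts (Suc i)) \<omega> - W (ts i) \<omega>) {..<n}"
  using wiener unfolding wiener_process_def by auto

lemma measurable_W_at_finite_valued:
  assumes f: "f \<in> borel_measurable M" and fS: "\<And>\<omega>. \<omega> \<in> space M \<Longrightarrow> f \<omega> \<in> S"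
    and "finite S" and S_nonneg: "\<And>c. c \<in> S \<Longrightarrow> 0 \<le> c"
  shows "(\<lambda>\<omega>. W (f \<omega>) \<omega>) \<in> borel_measurable M"
proof -
  have "(\<lambda>\<omega>. \<Sum>c\<in>S. indicator {\<omega>\<in>space M. f \<omega> = c} \<omega> * W c \<omega>) \<in> borel_measurable M"
    using W_measurable S_nonneg f by (intro borel_measurable_sum) auto
  moreover have "(\<Sum>c\<in>S. indicator {\<omega>\<in>space M. f \<omega> = c} \<omega> * W c \<omega>) = W (f \<omega>) \<omega>"
    if "\<omega> \<in> space M" for \<omega>
  proof -
    have "(\<Sum>c\<in>S. indicator {\<omega>\<in>space M. f \<omega> = c} \<omega> * W c \<omega>) = (\<Sum>c\<in>S. if c = f \<omega> then W c \<omega> else 0)"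
      using that by (intro sum.cong) (auto simp: indicator_def)
    then show ?thesis using \<open>finite S\<close> fS[OF that] by (simp add: sum.delta')
  qed
  ultimately show ?thesis by (rule measurable_cong[THEN iffD1, rotated]) simp
qed

text \<open>\<open>\<Phi>\<close> sees the path only through the first \<open>m\<close> increments, which are independent
  of the \<open>m\<close>-th one.\<close>

lemma
  fixes ts :: "nat \<Rightarrow> real" and \<Phi> :: "(nat \<Rightarrow> real) \<Rightarrow> real" and G :: "real \<Rightarrow> real"
  assumes ts0: "ts 0 = 0" and ts_less: "\<And>i. ts i < ts (Suc i)"
    and \<Phi>_measurable: "\<Phi> \<in> borel_measurable (PiM {..m} (\<lambda>_. borel))" and \<Phi>_bounded: "\<And>x. \<bar>\<Phi> x\<bar> \<le> C"
    and [measurable]: "G \<in> borel_measurable borel"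
    and G_integrable: "integrable M (\<lambda>\<omega>. G (W (ts (Suc m)) \<omega> - W (ts m) \<omega>))"
  shows integrable_mult_indep_increment:
      "integrable M (\<lambda>\<omega>. \<Phi> (\<lambda>k\<in>{..m}. W (ts k) \<omega>) * G (W (ts (Suc m)) \<omega> - W (ts m) \<omega>))"
    and integral_mult_indep_increment:
      "(\<integral>\<omega>. \<Phi> (\<lambda>k\<in>{..m}. W (ts k) \<omega>) * G (W (ts (Suc m)) \<omega> - W (ts m) \<omega>) \<partial>M)
         = (\<integral>\<omega>. \<Phi> (\<lambda>k\<in>{..m}. W (ts k) \<omega>) \<partial>M) * (\<integral>\<omega>. G (W (ts (Suc m)) \<omega> - W (ts m) \<omega>) \<partial>M)"
proof -
  define I where "I i \<omega> = W (ts (Suc i)) \<omega> - W (ts i) \<omega>" for i \<omega>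
  have "0 \<le> ts i" for i
    by (induction i) (use ts0 ts_less in \<open>auto intro: order.trans less_imp_le\<close>)
  then have [measurable]: "I i \<in> borel_measurable M" for i
    unfolding I_def using W_measurable by auto
  have "indep_vars (\<lambda>_. borel) I {..<Suc m}"
    unfolding I_def by (rule W_increments_indep) (use ts0 ts_less in auto)
  then have indep: "indep_var (PiM {..<m} (\<lambda>_. borel)) (\<lambda>\<omega>. restrict (\<lambda>i. I i \<omega>) {..<m})
              (PiM {m} (\<lambda>_. borel)) (\<lambda>\<omega>. restrict (\<lambda>i. I i \<omega>) {m})"
    by (rule indep_var_restrict) auto
  define Y1 where "Y1 x = \<Phi> (\<lambda>k\<in>{..m}. \<Sum>i<k. x i)" for x :: "nat \<Rightarrow> real"
  define Y2 where "Y2 x = G (x m)" for x :: "nat \<Rightarrow> real"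
  have Y1_measurable: "Y1 \<in> borel_measurable (PiM {..<m} (\<lambda>_. borel))"
  proof -
    have "(\<lambda>x::nat\<Rightarrow>real. \<lambda>k\<in>{..m}. \<Sum>i<k. x i) \<in> measurable (PiM {..<m} (\<lambda>_. borel)) (PiM {..m} (\<lambda>_. borel))"
      by (rule measurable_restrict) measurable
    from measurable_compose[OF this \<Phi>_measurable] show ?thesis unfolding Y1_def by simp
  qed
  have Y2_measurable: "Y2 \<in> borel_measurable (PiM {m} (\<lambda>_. borel))"
    unfolding Y2_def by measurable
  note indep' = indep_var_compose[OF indep Y1_measurable Y2_measurable]
  have telescope: "(Y1 \<circ> (\<lambda>\<omega>. restrict (\<lambda>i. I i \<omega>) {..<m})) = (\<lambda>\<omega>. \<Phi> (\<lambda>k\<in>{..m}. W (ts k) \<omega> - W 0 \<omega>))"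
  proof
    fix \<omega>
    have "(\<Sum>i<k. restrict (\<lambda>i. I i \<omega>) {..<m} i) = W (ts k) \<omega> - W 0 \<omega>" if "k \<in> {..m}" for k
    proof -
      have "(\<Sum>i<k. restrict (\<lambda>i. I i \<omega>) {..<m} i) = (\<Sum>i<k. I i \<omega>)"
        using that by (intro sum.cong) auto
      then show ?thesis
        unfolding I_def using sum_lessThan_telescope[of "\<lambda>i. W (ts i) \<omega>" k] ts0 by simp
    qed
    then show "(Y1 \<circ> (\<lambda>\<omega>. restrict (\<lambda>i. I i \<omega>) {..<m})) \<omega> = \<Phi> (\<lambda>k\<in>{..m}. W (ts k) \<omega> - W 0 \<omega>)"
      unfolding Y1_def comp_def by (metis (no_types, lifting) restrict_ext)
  qed
  have last_increment: "(Y2 \<circ> (\<lambda>\<omega>. restrict (\<lambda>i. I i \<omega>) {m})) = (\<lambda>\<omega>. G (W (ts (Suc m)) \<omega> - W (ts m) \<omega>))"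
    by (auto simp: Y2_def I_def)
  have "integrable M (\<lambda>\<omega>. \<Phi> (\<lambda>k\<in>{..m}. W (ts k) \<omega> - W 0 \<omega>))"
  proof (rule integrable_const_bound[where B=C])
    show "(\<lambda>\<omega>. \<Phi> (\<lambda>k\<in>{..m}. W (ts k) \<omega> - W 0 \<omega>)) \<in> borel_measurable M"
      unfolding telescope[symmetric]
      by (rule measurable_comp[OF measurable_restrict Y1_measurable]) auto
  qed (use \<Phi>_bounded in simp)
  note integrable = indep_var_integrable[OF indep', unfolded telescope last_increment, OF this G_integrable]
    and integral = indep_var_lebesgue_integral[OF indep', unfolded telescope last_increment, OF this G_integrable]
  have W0_eq: "(\<lambda>k\<in>{..m}. W (ts k) \<omega> - W 0 \<omega>) = (\<lambda>k\<in>{..m}. W (ts k) \<omega>)" if "\<omega> \<in> space M" for \<omega>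
    using W_0[OF that] by simp
  show "integrable M (\<lambda>\<omega>. \<Phi> (\<lambda>k\<in>{..m}. W (ts k) \<omega>) * G (W (ts (Suc m)) \<omega> - W (ts m) \<omega>))"
    using integrable by (rule Bochner_Integration.integrable_cong[OF refl, THEN iffD1, rotated]) (simp add: W0_eq)
  show "(\<integral>\<omega>. \<Phi> (\<lambda>k\<in>{..m}. W (ts k) \<omega>) * G (W (ts (Suc m)) \<omega> - W (ts m) \<omega>) \<partial>M)
         = (\<integral>\<omega>. \<Phi> (\<lambda>k\<in>{..m}. W (ts k) \<omega>) \<partial>M) * (\<integral>\<omega>. G (W (ts (Suc m)) \<omega> - W (ts m) \<omega>) \<partial>M)"
    using integral by (simp add: W0_eq cong: Bochner_Integration.integral_cong)
qed

end

section \<open>The adaptive mesh\<close>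

text \<open>A step pattern records for each step whether it had size \<open>h\<close> (\<open>True\<close>) or \<open>h\<^sup>2\<close>.\<close>

fun pattern_time :: "real \<Rightarrow> bool list \<Rightarrow> nat \<Rightarrow> real" where
  "pattern_time h p 0 = 0"
| "pattern_time h p (Suc k) = pattern_time h p k + (if k < length p \<and> p ! k then h else h\<^sup>2)"

lemma pattern_time_less: "0 < h \<Longrightarrow> pattern_time h p k < pattern_time h p (Suc k)"
  by simp

lemma pattern_time_nonneg: "0 < h \<Longrightarrow> 0 \<le> pattern_time h p k"
  by (induction k) auto

lemma finite_patterns: "finite {p :: bool list. length p = n}"
  using finite_lists_length_eq[of "UNIV :: bool set" n] by simp

locale adaptive_scheme = wiener_space +
  fixes a b T h :: real
  assumes a_neg: "a < 0" and b_pos: "0 < b" and T_pos: "0 < T"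
    and h_pos: "0 < h" and h_small: "h \<le> exp (-1)"
begin

abbreviation "\<delta> \<equiv> delta h"
abbreviation "t \<equiv> tmesh a b W h"

definition "X n \<omega> = W (t \<omega> n) \<omega>"
definition "far x \<longleftrightarrow> \<delta> < dist_bd a b x"

lemma one_le_ln_inv_h: "1 \<le> ln (1/h)"
proof -
  have "ln h \<le> ln (exp (-1))"
    using h_pos h_small by (subst ln_le_cancel_iff) auto
  then show ?thesis using h_pos by (simp add: ln_div)
qed

lemma h_less_1: "h < 1"
  using h_small exp_less_one_iff[of "-1"] by linarith

lemma h2_le_h: "h\<^sup>2 \<le> h"
  using h_pos h_less_1 by (simp add: power2_eq_square)

lemma h2_pos: "0 < h\<^sup>2"
  using h_pos by simp

lemma h_ln_inv_h_pos: "0 < h * ln (1/h)"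
  using h_pos one_le_ln_inv_h by (intro mult_pos_pos) linarith+

lemma delta_sq: "\<delta>\<^sup>2 = 4 * h * ln (1/h)"
  unfolding delta_def using h_ln_inv_h_pos by simp

lemma delta_pos: "0 < \<delta>"
  unfolding delta_def using h_ln_inv_h_pos by simp

lemma h_le_delta_sq: "h \<le> \<delta>\<^sup>2"
  unfolding delta_sq using h_pos one_le_ln_inv_h by simp

lemma step_eq: "step a b h x = (if far x then h else h\<^sup>2)"
  unfolding step_def far_def by simp

lemma step_in: "step a b h x \<in> {h, h\<^sup>2}"
  unfolding step_eq by simp

lemma step_pos: "0 < step a b h x"
  using h_pos unfolding step_eq by simp

lemma step_measurable[measurable]: "step a b h \<in> borel_measurable borel"
  unfolding step_def[abs_def] dist_bd_def by measurable

lemma far_measurable[measurable]: "Measurable.pred borel far"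
  unfolding far_def[abs_def] dist_bd_def by measurable

lemma t_Suc: "t \<omega> (Suc n) = t \<omega> n + step a b h (X n \<omega>)"
  by (simp add: X_def)

declare tmesh.simps(2)[simp del]

lemma strict_mono_t: "strict_mono (t \<omega>)"
  by (rule strict_monoI_Suc) (simp add: t_Suc step_pos)

lemma t_less_iff: "t \<omega> m < t \<omega> n \<longleftrightarrow> m < n"
  using strict_mono_less[OF strict_mono_t] .

lemma t_le_iff: "t \<omega> m \<le> t \<omega> n \<longleftrightarrow> m \<le> n"
  using strict_mono_less_eq[OF strict_mono_t] .

lemma t_ge: "real n * h\<^sup>2 \<le> t \<omega> n"
proof (induction n)
  case (Suc n)
  then show ?case using h2_le_h t_Suc[of \<omega> n] by (simp add: step_eq algebra_simps)
qed simp

lemma t_nonneg: "0 \<le> t \<omega> n"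
  using t_le_iff[of \<omega> 0 n] by simp

definition "step_pattern \<omega> n = map (\<lambda>k. far (X k \<omega>)) [0..<n]"

lemma length_step_pattern[simp]: "length (step_pattern \<omega> n) = n"
  by (simp add: step_pattern_def)

lemma t_eq_pattern_time: "k \<le> n \<Longrightarrow> t \<omega> k = pattern_time h (step_pattern \<omega> n) k"
proof (induction k)
  case (Suc k)
  then show ?case using t_Suc[of \<omega> k] by (simp add: step_pattern_def step_eq)
qed simp

lemma step_pattern_eq_iff:
  assumes "length p = n"
  shows "step_pattern \<omega> n = p \<longleftrightarrow> (\<forall>k<n. far (W (pattern_time h p k) \<omega>) = p ! k)"
proof
  assume "step_pattern \<omega> n = p"
  then show "\<forall>k<n. far (W (pattern_time h p k) \<omega>) = p ! k"
    using t_eq_pattern_time[of _ n \<omega>] by (auto simp: step_pattern_def X_def)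
next
  assume far_eq: "\<forall>k<n. far (W (pattern_time h p k) \<omega>) = p ! k"
  have t_eq: "k \<le> n \<Longrightarrow> t \<omega> k = pattern_time h p k" for k
  proof (induction k)
    case (Suc k)
    then show ?case using far_eq assms t_Suc[of \<omega> k] by (simp add: X_def step_eq)
  qed simp
  show "step_pattern \<omega> n = p"
    by (rule nth_equalityI) (use assms far_eq t_eq in \<open>auto simp: step_pattern_def X_def\<close>)
qed

lemma measurable_t_X: "(\<lambda>\<omega>. t \<omega> n) \<in> borel_measurable M \<and> X n \<in> borel_measurable M"
proof (induction n)
  case 0
  then show ?case using W_measurable[of 0] by (simp add: X_def)
next
  case (Suc n)
  then have [measurable]: "(\<lambda>\<omega>. t \<omega> n) \<in> borel_measurable M" "X n \<in> borel_measurable M"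
    by auto
  have t_Suc_measurable: "(\<lambda>\<omega>. t \<omega> (Suc n)) \<in> borel_measurable M"
    unfolding t_Suc by measurable
  define S where "S = (\<lambda>p. pattern_time h p (Suc n)) ` {p. length p = Suc n}"
  have "t \<omega> (Suc n) \<in> S" for \<omega>
    unfolding S_def t_eq_pattern_time[of "Suc n" "Suc n" \<omega>, OF order_refl] by simp
  moreover have "finite S" "\<And>c. c \<in> S \<Longrightarrow> 0 \<le> c"
    unfolding S_def using finite_patterns pattern_time_nonneg[OF h_pos] by (auto simp del: pattern_time.simps)
  ultimately have "X (Suc n) \<in> borel_measurable M"
    unfolding X_def by (intro measurable_W_at_finite_valued[OF t_Suc_measurable])
  with t_Suc_measurable show ?case by simp
qed

lemma t_measurable[measurable]: "(\<lambda>\<omega>. t \<omega> n) \<in> borel_measurable M"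
  using measurable_t_X by blast

lemma X_measurable[measurable]: "X n \<in> borel_measurable M"
  using measurable_t_X by blast

lemma X_0: "\<omega> \<in> space M \<Longrightarrow> X 0 \<omega> = 0"
  by (simp add: X_def W_0)

section \<open>Conditioning on the step pattern\<close>

definition "pattern_step p n = (if p ! n then h else h\<^sup>2)"

lemma pattern_time_Suc_diff:
  "n < length p \<Longrightarrow> pattern_time h p (Suc n) - pattern_time h p n = pattern_step p n"
  by (simp add: pattern_step_def)

lemma split_by_pattern:
  fixes F :: "(nat \<Rightarrow> real) \<Rightarrow> real \<Rightarrow> real \<Rightarrow> real"
  shows "F (\<lambda>k\<in>{..n}. X k \<omega>) (X (Suc n) \<omega> - X n \<omega>) (step a b h (X n \<omega>))
    = (\<Sum>p | length p = Suc n. of_bool (\<forall>k\<in>{..n}. far (W (pattern_time h p k) \<omega>) = p ! k) *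
         F (\<lambda>k\<in>{..n}. W (pattern_time h p k) \<omega>)
           (W (pattern_time h p (Suc n)) \<omega> - W (pattern_time h p n) \<omega>) (pattern_step p n))"
    (is "?lhs = (\<Sum>p | length p = Suc n. ?term p)")
proof -
  let ?p = "step_pattern \<omega> (Suc n)"
  have "?term p = (if p = ?p then ?lhs else 0)" if "length p = Suc n" for p
  proof (cases "p = ?p")
    case True
    have X_eq: "k \<le> Suc n \<Longrightarrow> X k \<omega> = W (pattern_time h p k) \<omega>" for k
      using t_eq_pattern_time[of k "Suc n" \<omega>] True by (simp add: X_def)
    have "step a b h (X n \<omega>) = t \<omega> (Suc n) - t \<omega> n"
      using t_Suc by simp
    also have "\<dots> = pattern_step p n"
      using t_eq_pattern_time[of "Suc n" "Suc n" \<omega>] t_eq_pattern_time[of n "Suc n" \<omega>] True that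
      by (simp del: pattern_time.simps add: pattern_time_Suc_diff)
    finally have "step a b h (X n \<omega>) = pattern_step p n" .
    moreover have "(\<lambda>k\<in>{..n}. X k \<omega>) = (\<lambda>k\<in>{..n}. W (pattern_time h p k) \<omega>)"
      using X_eq by (intro restrict_ext) auto
    moreover have "\<forall>k\<in>{..n}. far (W (pattern_time h p k) \<omega>) = p ! k"
      using True step_pattern_eq_iff[OF that, of \<omega>] by (auto simp: less_Suc_eq_le atMost_iff)
    ultimately show ?thesis
      using True X_eq[of "Suc n"] X_eq[of n] by (simp del: pattern_time.simps)
  next
    case False
    then have "\<not> (\<forall>k\<in>{..n}. far (W (pattern_time h p k) \<omega>) = p ! k)"
      using step_pattern_eq_iff[OF that, of \<omega>] by (auto simp: less_Suc_eq_le atMost_iff)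
    then show ?thesis using False by simp
  qed
  then have "(\<Sum>p | length p = Suc n. ?term p) = (\<Sum>p | length p = Suc n. if p = ?p then ?lhs else 0)"
    by (intro sum.cong) auto
  also have "\<dots> = ?lhs"
    using finite_patterns by (simp add: sum.delta')
  finally show ?thesis by simp
qed

lemma
  fixes \<Psi> :: "(nat \<Rightarrow> real) \<Rightarrow> real" and G :: "real \<Rightarrow> real"
  assumes p: "length p = Suc n"
    and \<Psi>_measurable: "\<Psi> \<in> borel_measurable (PiM {..n} (\<lambda>_. borel))" and \<Psi>_bounded: "\<And>v. \<bar>\<Psi> v\<bar> \<le> C"
    and [measurable]: "G \<in> borel_measurable borel"
    and G_integrable: "integrable lborel (\<lambda>y. normal_density 0 (sqrt (pattern_step p n)) y * G y)"
  shows integrable_pattern_increment: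
      "integrable M (\<lambda>\<omega>. \<Psi> (\<lambda>k\<in>{..n}. W (pattern_time h p k) \<omega>)
         * G (W (pattern_time h p (Suc n)) \<omega> - W (pattern_time h p n) \<omega>))"
    and integral_pattern_increment:
      "(\<integral>\<omega>. \<Psi> (\<lambda>k\<in>{..n}. W (pattern_time h p k) \<omega>)
         * G (W (pattern_time h p (Suc n)) \<omega> - W (pattern_time h p n) \<omega>) \<partial>M)
       = (\<integral>\<omega>. \<Psi> (\<lambda>k\<in>{..n}. W (pattern_time h p k) \<omega>) * normal_expectation (pattern_step p n) G \<partial>M)"
proof -
  have D: "distributed M lborel (\<lambda>\<omega>. W (pattern_time h p (Suc n)) \<omega> - W (pattern_time h p n) \<omega>)
      (\<lambda>x. ennreal (normal_density 0 (sqrt (pattern_step p n)) x))"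
    using W_increment_distributed[OF pattern_time_nonneg[OF h_pos] pattern_time_less[OF h_pos], of p n]
      pattern_time_Suc_diff[of n p] p by (simp del: pattern_time.simps)
  have G_int: "integrable M (\<lambda>\<omega>. G (W (pattern_time h p (Suc n)) \<omega> - W (pattern_time h p n) \<omega>))"
    using distributed_integrable[OF D, of G] G_integrable by simp
  note indep = integrable_mult_indep_increment[OF pattern_time.simps(1) pattern_time_less[OF h_pos]
      \<Psi>_measurable \<Psi>_bounded _ G_int]
    integral_mult_indep_increment[OF pattern_time.simps(1) pattern_time_less[OF h_pos]
      \<Psi>_measurable \<Psi>_bounded _ G_int]
  show "integrable M (\<lambda>\<omega>. \<Psi> (\<lambda>k\<in>{..n}. W (pattern_time h p k) \<omega>)
         * G (W (pattern_time h p (Suc n)) \<omega> - W (pattern_time h p n) \<omega>))"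
    using indep(1) by simp
  have "(\<integral>\<omega>. G (W (pattern_time h p (Suc n)) \<omega> - W (pattern_time h p n) \<omega>) \<partial>M)
      = normal_expectation (pattern_step p n) G"
    using distributed_integral[OF D, of G] unfolding normal_expectation_def by simp
  then show "(\<integral>\<omega>. \<Psi> (\<lambda>k\<in>{..n}. W (pattern_time h p k) \<omega>)
         * G (W (pattern_time h p (Suc n)) \<omega> - W (pattern_time h p n) \<omega>) \<partial>M)
       = (\<integral>\<omega>. \<Psi> (\<lambda>k\<in>{..n}. W (pattern_time h p k) \<omega>) * normal_expectation (pattern_step p n) G \<partial>M)"
    using indep(2) by simp
qed

text \<open>Although the mesh is random, conditionally on \<open>X\<^sub>0, \<dots>, X\<^sub>n\<close> the next increment is
  centred Gaussian with variance \<open>step (X\<^sub>n)\<close>.\<close>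

lemma
  fixes \<Phi> :: "(nat \<Rightarrow> real) \<Rightarrow> real" and G :: "real \<Rightarrow> real"
  assumes \<Phi>_measurable: "\<Phi> \<in> borel_measurable (PiM {..n} (\<lambda>_. borel))" and \<Phi>_bounded: "\<And>v. \<bar>\<Phi> v\<bar> \<le> C"
    and [measurable]: "G \<in> borel_measurable borel"
    and G_integrable: "\<And>s. s \<in> {h, h\<^sup>2} \<Longrightarrow> integrable lborel (\<lambda>y. normal_density 0 (sqrt s) y * G y)"
  shows integrable_mult_next_increment:
      "integrable M (\<lambda>\<omega>. \<Phi> (\<lambda>k\<in>{..n}. X k \<omega>) * G (X (Suc n) \<omega> - X n \<omega>))"
    and integrable_mult_normal_expectation_step:
      "integrable M (\<lambda>\<omega>. \<Phi> (\<lambda>k\<in>{..n}. X k \<omega>) * normal_expectation (step a b h (X n \<omega>)) G)"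
    and integral_mult_next_increment:
      "(\<integral>\<omega>. \<Phi> (\<lambda>k\<in>{..n}. X k \<omega>) * G (X (Suc n) \<omega> - X n \<omega>) \<partial>M)
       = (\<integral>\<omega>. \<Phi> (\<lambda>k\<in>{..n}. X k \<omega>) * normal_expectation (step a b h (X n \<omega>)) G \<partial>M)"
proof -
  define \<Psi> where "\<Psi> p v = of_bool (\<forall>k\<in>{..n}. far (v k) = p ! k) * \<Phi> v" for p and v :: "nat \<Rightarrow> real"
  have \<Psi>_measurable: "\<Psi> p \<in> borel_measurable (PiM {..n} (\<lambda>_. borel))" for p
    unfolding \<Psi>_def[abs_def] using \<Phi>_measurable by measurable
  have \<Psi>_bounded: "\<bar>\<Psi> p v\<bar> \<le> C" for p v
    using \<Phi>_bounded[of v] \<Phi>_bounded[of undefined] unfolding \<Psi>_def by auto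
  define Wp where "Wp p \<omega> = (\<lambda>k\<in>{..n}. W (pattern_time h p k) \<omega>)" for p \<omega>
  define Yp where "Yp p \<omega> = W (pattern_time h p (Suc n)) \<omega> - W (pattern_time h p n) \<omega>" for p \<omega>
  let ?P = "{p :: bool list. length p = Suc n}"
  have G_integrable': "integrable lborel (\<lambda>y. normal_density 0 (sqrt (pattern_step p n)) y * G y)" for p
    using G_integrable by (simp add: pattern_step_def)
  note increment = integrable_pattern_increment[OF _ \<Psi>_measurable \<Psi>_bounded _ G_integrable', folded Wp_def Yp_def]
    integral_pattern_increment[OF _ \<Psi>_measurable \<Psi>_bounded _ G_integrable', folded Wp_def Yp_def]
  have integrable_const: "integrable M (\<lambda>\<omega>. \<Psi> p (Wp p \<omega>) * c)" for p c
  proof (intro integrable_mult_left integrable_const_bound[where B=C])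
    have "Wp p \<in> measurable M (PiM {..n} (\<lambda>_. borel))"
      unfolding Wp_def using W_measurable pattern_time_nonneg[OF h_pos] by (intro measurable_restrict) auto
    then show "(\<lambda>\<omega>. \<Psi> p (Wp p \<omega>)) \<in> borel_measurable M"
      using \<Psi>_measurable by (rule measurable_compose)
  qed (use \<Psi>_bounded in simp)
  have split_G: "\<Phi> (\<lambda>k\<in>{..n}. X k \<omega>) * G (X (Suc n) \<omega> - X n \<omega>) = (\<Sum>p\<in>?P. \<Psi> p (Wp p \<omega>) * G (Yp p \<omega>))"
    and split_expectation: "\<Phi> (\<lambda>k\<in>{..n}. X k \<omega>) * normal_expectation (step a b h (X n \<omega>)) G
      = (\<Sum>p\<in>?P. \<Psi> p (Wp p \<omega>) * normal_expectation (pattern_step p n) G)" for \<omega>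
    using split_by_pattern[where F="\<lambda>v y s. \<Phi> v * G y" and \<omega>=\<omega>]
      split_by_pattern[where F="\<lambda>v y s. \<Phi> v * normal_expectation s G" and \<omega>=\<omega>]
    by (simp_all add: \<Psi>_def Wp_def Yp_def mult.assoc)
  show "integrable M (\<lambda>\<omega>. \<Phi> (\<lambda>k\<in>{..n}. X k \<omega>) * G (X (Suc n) \<omega> - X n \<omega>))"
    unfolding split_G by (intro Bochner_Integration.integrable_sum increment) auto
  show "integrable M (\<lambda>\<omega>. \<Phi> (\<lambda>k\<in>{..n}. X k \<omega>) * normal_expectation (step a b h (X n \<omega>)) G)"
    unfolding split_expectation by (intro Bochner_Integration.integrable_sum integrable_const)
  have "(\<integral>\<omega>. \<Phi> (\<lambda>k\<in>{..n}. X k \<omega>) * G (X (Suc n) \<omega> - X n \<omega>) \<partial>M)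
      = (\<Sum>p\<in>?P. (\<integral>\<omega>. \<Psi> p (Wp p \<omega>) * G (Yp p \<omega>) \<partial>M))"
    unfolding split_G by (intro Bochner_Integration.integral_sum increment) auto
  also have "\<dots> = (\<Sum>p\<in>?P. (\<integral>\<omega>. \<Psi> p (Wp p \<omega>) * normal_expectation (pattern_step p n) G \<partial>M))"
    by (intro sum.cong increment) auto
  also have "\<dots> = (\<integral>\<omega>. \<Phi> (\<lambda>k\<in>{..n}. X k \<omega>) * normal_expectation (step a b h (X n \<omega>)) G \<partial>M)"
    unfolding split_expectation by (intro Bochner_Integration.integral_sum[symmetric] integrable_const)
  finally show "(\<integral>\<omega>. \<Phi> (\<lambda>k\<in>{..n}. X k \<omega>) * G (X (Suc n) \<omega> - X n \<omega>) \<partial>M)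
       = (\<integral>\<omega>. \<Phi> (\<lambda>k\<in>{..n}. X k \<omega>) * normal_expectation (step a b h (X n \<omega>)) G \<partial>M)" .
qed

section \<open>The penalty function\<close>

definition "penalty x =
  min ((max 0 (a + 2*\<delta> - x))\<^sup>2) (9*\<delta>\<^sup>2) + min ((max 0 (x - (b - 2*\<delta>)))\<^sup>2) (9*\<delta>\<^sup>2)"

definition "penalty_slope x = 2 * max 0 (x - (b - 2*\<delta>)) - 2 * max 0 (a + 2*\<delta> - x)"

definition "large_jump_sq y = (if \<delta> < \<bar>y\<bar> then y\<^sup>2 else 0)"

lemma penalty_nonneg: "0 \<le> penalty x"
  unfolding penalty_def by simp

lemma penalty_le: "penalty x \<le> 18 * \<delta>\<^sup>2"
  unfolding penalty_def by linarith

lemma penalty_slope_bound: "x \<in> {a<..<b} \<Longrightarrow> \<bar>penalty_slope x\<bar> \<le> 8 * \<delta>"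
  unfolding penalty_slope_def using delta_pos by (auto simp: max_def abs_if)

lemma large_jump_sq_nonneg: "0 \<le> large_jump_sq y"
  unfolding large_jump_sq_def by simp

lemma penalty_measurable[measurable]: "penalty \<in> borel_measurable borel"
  unfolding penalty_def[abs_def] by measurable

lemma penalty_slope_measurable[measurable]: "penalty_slope \<in> borel_measurable borel"
  unfolding penalty_slope_def[abs_def] by measurable

lemma large_jump_sq_measurable[measurable]: "large_jump_sq \<in> borel_measurable borel"
  unfolding large_jump_sq_def[abs_def] by measurable

text \<open>A second-order expansion, exact for increments of size at most \<open>\<delta>\<close> started within
  \<open>\<delta>\<close> of the boundary; larger increments are absorbed by the error term.\<close>

lemma penalty_expansion:
  assumes "x \<in> {a<..<b}"
  shows "penalty x + penalty_slope x * y + (if far x then 0 else y\<^sup>2) - 19 * large_jump_sq y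
    \<le> penalty (x + y)"
proof -
  define u where "u = x - (b - 2*\<delta>)"
  define v where "v = a + 2*\<delta> - x"
  have "u < 2*\<delta>" "v < 2*\<delta>"
    using assms by (auto simp: u_def v_def)
  note upper = clipped_square_step[OF \<open>u < 2*\<delta>\<close> delta_pos, of y]
    and lower = clipped_square_step[OF \<open>v < 2*\<delta>\<close> delta_pos, of "-y", unfolded abs_minus_cancel power2_minus]
  have "(max 0 u)\<^sup>2 \<le> (3*\<delta>)\<^sup>2" "(max 0 v)\<^sup>2 \<le> (3*\<delta>)\<^sup>2"
    using \<open>u < 2*\<delta>\<close> \<open>v < 2*\<delta>\<close> delta_pos by (intro power_mono; simp)+
  then have "(max 0 u)\<^sup>2 \<le> 9*\<delta>\<^sup>2" "(max 0 v)\<^sup>2 \<le> 9*\<delta>\<^sup>2"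
    by (simp_all only: power_mult_distrib) simp_all
  then have "penalty x = (max 0 v)\<^sup>2 + (max 0 u)\<^sup>2"
    unfolding penalty_def u_def[symmetric] v_def[symmetric] by (simp only: min_absorb1)
  moreover have "penalty_slope x * y = 2 * max 0 v * - y + 2 * max 0 u * y"
    unfolding penalty_slope_def u_def v_def by (simp add: algebra_simps)
  moreover have "penalty (x + y) = min ((max 0 (v + - y))\<^sup>2) (9*\<delta>\<^sup>2) + min ((max 0 (u + y))\<^sup>2) (9*\<delta>\<^sup>2)"
    unfolding penalty_def u_def v_def by (simp add: algebra_simps)
  moreover have "(if far x then 0 else y\<^sup>2) - large_jump_sq y
      \<le> (if \<delta> \<le> u \<and> \<bar>y\<bar> \<le> \<delta> then y\<^sup>2 else 0) + (if \<delta> \<le> v \<and> \<bar>y\<bar> \<le> \<delta> then y\<^sup>2 else 0)"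
  proof (cases "far x")
    case False
    then have "\<delta> \<le> u \<or> \<delta> \<le> v"
      using assms unfolding far_def dist_bd_def u_def v_def by auto
    then show ?thesis by (auto simp: large_jump_sq_def)
  qed (auto simp: large_jump_sq_def)
  moreover have "large_jump_sq y = (if \<delta> < \<bar>y\<bar> then y\<^sup>2 else 0)"
    by (rule large_jump_sq_def)
  ultimately show ?thesis
    using upper lower by linarith
qed

text \<open>This is where the choice of \<open>\<delta>\<close> enters: \<open>exp (- \<delta>\<^sup>2 / (2 s)) \<le> h\<^sup>2\<close> for both step sizes.\<close>

lemma
  assumes "s \<in> {h, h\<^sup>2}"
  shows integrable_normal_large_jump_sq: "integrable lborel (\<lambda>y. normal_density 0 (sqrt s) y * large_jump_sq y)"
    and normal_expectation_large_jump_sq_le: "normal_expectation s large_jump_sq \<le> 8 * exp 1 * \<delta>\<^sup>2 * h\<^sup>2"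
proof -
  have s: "0 < s" "s \<le> \<delta>\<^sup>2"
    using assms h_pos h2_le_h h_le_delta_sq by auto
  have large_jump_sq_eq: "large_jump_sq = (\<lambda>y. y\<^sup>2 * indicator {y. \<delta> < \<bar>y\<bar>} y)"
    by (auto simp: large_jump_sq_def fun_eq_iff indicator_def)
  show "integrable lborel (\<lambda>y. normal_density 0 (sqrt s) y * large_jump_sq y)"
    unfolding large_jump_sq_eq by (rule integrable_normal_tail_square[OF s(1) delta_pos s(2)])
  have "2 * ln (1/h) \<le> \<delta>\<^sup>2 / (2 * s)"
  proof (cases "s = h")
    case True
    then show ?thesis
      unfolding delta_sq using h_pos by (simp add: field_simps)
  next
    case False
    then have "s = h\<^sup>2" using assms by simp
    then have "\<delta>\<^sup>2 / (2 * s) = 2 * ln (1/h) / h"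
      unfolding delta_sq using h_pos by (simp add: power2_eq_square field_simps)
    moreover have "2 * ln (1/h) \<le> 2 * ln (1/h) / h"
      using h_pos h_less_1 one_le_ln_inv_h by (simp add: le_divide_eq)
    ultimately show ?thesis by simp
  qed
  then have "exp (- \<delta>\<^sup>2 / (2 * s)) \<le> exp (- (2 * ln (1/h)))"
    by (subst exp_le_cancel_iff) linarith
  also have "- (2 * ln (1/h)) = ln h + ln h"
    using h_pos by (simp add: ln_div)
  also have "exp (ln h + ln h) = h\<^sup>2"
    using h_pos by (simp only: exp_add exp_ln power2_eq_square)
  finally have "8 * exp 1 * \<delta>\<^sup>2 * exp (- \<delta>\<^sup>2 / (2 * s)) \<le> 8 * exp 1 * \<delta>\<^sup>2 * h\<^sup>2"
    by (intro mult_left_mono) auto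
  then show "normal_expectation s large_jump_sq \<le> 8 * exp 1 * \<delta>\<^sup>2 * h\<^sup>2"
    using integral_normal_tail_square_le[OF s(1) delta_pos s(2)]
    unfolding normal_expectation_def large_jump_sq_eq by linarith
qed

section \<open>Expected number of small steps\<close>

definition "alive n \<omega> \<longleftrightarrow> (\<forall>k\<in>{..n}. X k \<omega> \<in> {a<..<b})"

lemma alive_measurable[measurable]: "Measurable.pred M (alive n)"
  unfolding alive_def[abs_def] by measurable

lemma alive_restrict: "(\<forall>k\<in>{..n}. (\<lambda>k\<in>{..n}. X k \<omega>) k \<in> {a<..<b}) \<longleftrightarrow> alive n \<omega>"
  by (simp add: alive_def)

lemma alive_vector_measurable[measurable]:
  "Measurable.pred (PiM {..n::nat} (\<lambda>_. borel)) (\<lambda>v. \<forall>k\<in>{..n}. v k \<in> {a<..<b})"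
proof (intro pred_intros_finite)
  show "Measurable.pred (PiM {..n} (\<lambda>_. borel)) (\<lambda>v. v k \<in> {a<..<b})" if "k \<in> {..n}" for k
    using that by measurable
qed simp

lemma
  shows integrable_alive_slope_increment:
      "integrable M (\<lambda>\<omega>. of_bool (alive n \<omega>) * penalty_slope (X n \<omega>) * (X (Suc n) \<omega> - X n \<omega>))"
    and integral_alive_slope_increment:
      "(\<integral>\<omega>. of_bool (alive n \<omega>) * penalty_slope (X n \<omega>) * (X (Suc n) \<omega> - X n \<omega>) \<partial>M) = 0"
proof -
  define \<Phi> where "\<Phi> v = of_bool (\<forall>k\<in>{..n}. v k \<in> {a<..<b}) * penalty_slope (v n)" for v :: "nat \<Rightarrow> real"
  have \<Phi>_measurable: "\<Phi> \<in> borel_measurable (PiM {..n} (\<lambda>_. borel))"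
    unfolding \<Phi>_def[abs_def] by measurable
  have \<Phi>_bounded: "\<bar>\<Phi> v\<bar> \<le> 8 * \<delta>" for v
    using penalty_slope_bound[of "v n"] delta_pos unfolding \<Phi>_def by auto
  have "\<Phi> (\<lambda>k\<in>{..n}. X k \<omega>) = of_bool (alive n \<omega>) * penalty_slope (X n \<omega>)" for \<omega>
    unfolding \<Phi>_def alive_restrict by simp
  moreover have "s \<in> {h, h\<^sup>2} \<Longrightarrow> 0 < s" for s
    using h_pos by auto
  ultimately show "integrable M (\<lambda>\<omega>. of_bool (alive n \<omega>) * penalty_slope (X n \<omega>) * (X (Suc n) \<omega> - X n \<omega>))"
    and "(\<integral>\<omega>. of_bool (alive n \<omega>) * penalty_slope (X n \<omega>) * (X (Suc n) \<omega> - X n \<omega>) \<partial>M) = 0"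
    using integrable_mult_next_increment[OF \<Phi>_measurable \<Phi>_bounded, of "\<lambda>y. y"]
      integral_mult_next_increment[OF \<Phi>_measurable \<Phi>_bounded, of "\<lambda>y. y"] integrable_normal_first_moment
    by (simp_all add: normal_expectation_id step_pos)
qed

lemma
  shows integrable_near_increment_sq:
      "integrable M (\<lambda>\<omega>. of_bool (alive n \<omega> \<and> \<not> far (X n \<omega>)) * (X (Suc n) \<omega> - X n \<omega>)\<^sup>2)"
    and integral_near_increment_sq:
      "(\<integral>\<omega>. of_bool (alive n \<omega> \<and> \<not> far (X n \<omega>)) * (X (Suc n) \<omega> - X n \<omega>)\<^sup>2 \<partial>M)
       = h\<^sup>2 * (\<integral>\<omega>. of_bool (alive n \<omega> \<and> \<not> far (X n \<omega>)) \<partial>M)"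
proof -
  define \<Phi> where "\<Phi> v = (of_bool ((\<forall>k\<in>{..n}. v k \<in> {a<..<b}) \<and> \<not> far (v n)) :: real)" for v :: "nat \<Rightarrow> real"
  have \<Phi>_measurable: "\<Phi> \<in> borel_measurable (PiM {..n} (\<lambda>_. borel))"
    unfolding \<Phi>_def[abs_def] by measurable
  have \<Phi>_bounded: "\<bar>\<Phi> v\<bar> \<le> 1" for v
    unfolding \<Phi>_def by simp
  have "\<Phi> (\<lambda>k\<in>{..n}. X k \<omega>) = of_bool (alive n \<omega> \<and> \<not> far (X n \<omega>))" for \<omega>
    unfolding \<Phi>_def alive_restrict by simp
  moreover have "s \<in> {h, h\<^sup>2} \<Longrightarrow> 0 < s" for s
    using h_pos by auto
  ultimately have "integrable M (\<lambda>\<omega>. of_bool (alive n \<omega> \<and> \<not> far (X n \<omega>)) * (X (Suc n) \<omega> - X n \<omega>)\<^sup>2)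
    \<and> (\<integral>\<omega>. of_bool (alive n \<omega> \<and> \<not> far (X n \<omega>)) * (X (Suc n) \<omega> - X n \<omega>)\<^sup>2 \<partial>M)
       = (\<integral>\<omega>. of_bool (alive n \<omega> \<and> \<not> far (X n \<omega>)) * step a b h (X n \<omega>) \<partial>M)"
    using integrable_mult_next_increment[OF \<Phi>_measurable \<Phi>_bounded, of "\<lambda>y. y\<^sup>2"]
      integral_mult_next_increment[OF \<Phi>_measurable \<Phi>_bounded, of "\<lambda>y. y\<^sup>2"] integrable_normal_second_moment
    by (simp add: normal_expectation_power2 step_pos)
  moreover have "of_bool (alive n \<omega> \<and> \<not> far (X n \<omega>)) * step a b h (X n \<omega>)
      = h\<^sup>2 * of_bool (alive n \<omega> \<and> \<not> far (X n \<omega>))" for \<omega>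
    by (simp add: step_eq)
  ultimately show "integrable M (\<lambda>\<omega>. of_bool (alive n \<omega> \<and> \<not> far (X n \<omega>)) * (X (Suc n) \<omega> - X n \<omega>)\<^sup>2)"
    and "(\<integral>\<omega>. of_bool (alive n \<omega> \<and> \<not> far (X n \<omega>)) * (X (Suc n) \<omega> - X n \<omega>)\<^sup>2 \<partial>M)
       = h\<^sup>2 * (\<integral>\<omega>. of_bool (alive n \<omega> \<and> \<not> far (X n \<omega>)) \<partial>M)"
    by simp_all
qed

lemma
  shows integrable_alive_large_jump_sq:
      "integrable M (\<lambda>\<omega>. of_bool (alive n \<omega>) * large_jump_sq (X (Suc n) \<omega> - X n \<omega>))"
    and integral_alive_large_jump_sq_le:
      "(\<integral>\<omega>. of_bool (alive n \<omega>) * large_jump_sq (X (Suc n) \<omega> - X n \<omega>) \<partial>M) \<le> 8 * exp 1 * \<delta>\<^sup>2 * h\<^sup>2"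
proof -
  define \<Phi> where "\<Phi> v = (of_bool (\<forall>k\<in>{..n}. v k \<in> {a<..<b}) :: real)" for v :: "nat \<Rightarrow> real"
  have \<Phi>_measurable: "\<Phi> \<in> borel_measurable (PiM {..n} (\<lambda>_. borel))"
    unfolding \<Phi>_def[abs_def] by measurable
  have \<Phi>_bounded: "\<bar>\<Phi> v\<bar> \<le> 1" for v
    unfolding \<Phi>_def by simp
  have "\<Phi> (\<lambda>k\<in>{..n}. X k \<omega>) = of_bool (alive n \<omega>)" for \<omega>
    unfolding \<Phi>_def alive_restrict ..
  then have integrable: "integrable M (\<lambda>\<omega>. of_bool (alive n \<omega>) * large_jump_sq (X (Suc n) \<omega> - X n \<omega>))"
    and integrable': "integrable M (\<lambda>\<omega>. of_bool (alive n \<omega>) * normal_expectation (step a b h (X n \<omega>)) large_jump_sq)"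
    and integral: "(\<integral>\<omega>. of_bool (alive n \<omega>) * large_jump_sq (X (Suc n) \<omega> - X n \<omega>) \<partial>M)
      = (\<integral>\<omega>. of_bool (alive n \<omega>) * normal_expectation (step a b h (X n \<omega>)) large_jump_sq \<partial>M)"
    using integrable_mult_next_increment[OF \<Phi>_measurable \<Phi>_bounded, of large_jump_sq]
      integrable_mult_normal_expectation_step[OF \<Phi>_measurable \<Phi>_bounded, of large_jump_sq]
      integral_mult_next_increment[OF \<Phi>_measurable \<Phi>_bounded, of large_jump_sq] integrable_normal_large_jump_sq
    by simp_all
  show "integrable M (\<lambda>\<omega>. of_bool (alive n \<omega>) * large_jump_sq (X (Suc n) \<omega> - X n \<omega>))"
    by (fact integrable)
  have "normal_expectation s large_jump_sq \<ge> 0" for s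
    unfolding normal_expectation_def using large_jump_sq_nonneg
    by (intro Bochner_Integration.integral_nonneg) simp
  then have "(\<integral>\<omega>. of_bool (alive n \<omega>) * normal_expectation (step a b h (X n \<omega>)) large_jump_sq \<partial>M)
      \<le> (\<integral>\<omega>. 8 * exp 1 * \<delta>\<^sup>2 * h\<^sup>2 \<partial>M)"
    using normal_expectation_large_jump_sq_le[OF step_in]
    by (intro integral_mono[OF integrable']) (auto simp: of_bool_def)
  then show "(\<integral>\<omega>. of_bool (alive n \<omega>) * large_jump_sq (X (Suc n) \<omega> - X n \<omega>) \<partial>M) \<le> 8 * exp 1 * \<delta>\<^sup>2 * h\<^sup>2"
    unfolding integral by (simp add: prob_space)
qed

lemma integrable_alive_penalty: "integrable M (\<lambda>\<omega>. of_bool (alive n \<omega>) * penalty (X m \<omega>))"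
  by (rule integrable_bounded[where B="18 * \<delta>\<^sup>2"]) (use penalty_nonneg penalty_le in auto)

lemma integrable_alive: "integrable M (\<lambda>\<omega>. of_bool (alive n \<omega>) :: real)"
  by (rule integrable_bounded[where B=1]) auto

lemma penalty_drift:
  "h\<^sup>2 * (\<integral>\<omega>. of_bool (alive n \<omega> \<and> \<not> far (X n \<omega>)) \<partial>M)
     \<le> (\<integral>\<omega>. of_bool (alive n \<omega>) * penalty (X (Suc n) \<omega>) \<partial>M)
        - (\<integral>\<omega>. of_bool (alive n \<omega>) * penalty (X n \<omega>) \<partial>M) + 152 * exp 1 * \<delta>\<^sup>2 * h\<^sup>2"
proof -
  define Y where "Y \<omega> = X (Suc n) \<omega> - X n \<omega>" for \<omega>
  define lower where "lower \<omega> = of_bool (alive n \<omega>) * penalty (X n \<omega>)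
    + of_bool (alive n \<omega>) * penalty_slope (X n \<omega>) * Y \<omega>
    + of_bool (alive n \<omega> \<and> \<not> far (X n \<omega>)) * (Y \<omega>)\<^sup>2
    - 19 * (of_bool (alive n \<omega>) * large_jump_sq (Y \<omega>))" for \<omega>
  note integrable = integrable_alive_penalty integrable_alive_slope_increment
    integrable_near_increment_sq integrable_alive_large_jump_sq
  have "lower \<omega> \<le> of_bool (alive n \<omega>) * penalty (X (Suc n) \<omega>)" for \<omega>
  proof (cases "alive n \<omega>")
    case True
    then have "X n \<omega> \<in> {a<..<b}" by (simp add: alive_def)
    from penalty_expansion[OF this, of "Y \<omega>"] show ?thesis
      using True by (cases "far (X n \<omega>)") (simp_all add: lower_def Y_def)
  qed (simp add: lower_def)
  then have "(\<integral>\<omega>. lower \<omega> \<partial>M) \<le> (\<integral>\<omega>. of_bool (alive n \<omega>) * penalty (X (Suc n) \<omega>) \<partial>M)"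
    unfolding lower_def Y_def using integrable by (intro integral_mono) auto
  moreover have "(\<integral>\<omega>. lower \<omega> \<partial>M)
      = (\<integral>\<omega>. of_bool (alive n \<omega>) * penalty (X n \<omega>) \<partial>M)
        + (\<integral>\<omega>. of_bool (alive n \<omega>) * penalty_slope (X n \<omega>) * Y \<omega> \<partial>M)
        + (\<integral>\<omega>. of_bool (alive n \<omega> \<and> \<not> far (X n \<omega>)) * (Y \<omega>)\<^sup>2 \<partial>M)
        - 19 * (\<integral>\<omega>. of_bool (alive n \<omega>) * large_jump_sq (Y \<omega>) \<partial>M)"
    unfolding lower_def Y_def using integrable by simp
  ultimately show ?thesis
    using integral_alive_slope_increment[of n] integral_near_increment_sq[of n]
      integral_alive_large_jump_sq_le[of n] unfolding Y_def by linarith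
qed

lemma penalty_death:
  "(\<integral>\<omega>. of_bool (alive n \<omega>) * penalty (X (Suc n) \<omega>) \<partial>M)
    \<le> (\<integral>\<omega>. of_bool (alive (Suc n) \<omega>) * penalty (X (Suc n) \<omega>) \<partial>M)
       + 18 * \<delta>\<^sup>2 * ((\<integral>\<omega>. of_bool (alive n \<omega>) \<partial>M) - (\<integral>\<omega>. of_bool (alive (Suc n) \<omega>) \<partial>M))"
proof -
  have "of_bool (alive n \<omega>) * penalty (X (Suc n) \<omega>)
      \<le> of_bool (alive (Suc n) \<omega>) * penalty (X (Suc n) \<omega>)
        + 18 * \<delta>\<^sup>2 * (of_bool (alive n \<omega>) - of_bool (alive (Suc n) \<omega>))" for \<omega>
    using penalty_le[of "X (Suc n) \<omega>"] penalty_nonneg[of "X (Suc n) \<omega>"]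
    by (auto simp: alive_def)
  then have "(\<integral>\<omega>. of_bool (alive n \<omega>) * penalty (X (Suc n) \<omega>) \<partial>M)
      \<le> (\<integral>\<omega>. of_bool (alive (Suc n) \<omega>) * penalty (X (Suc n) \<omega>)
          + 18 * \<delta>\<^sup>2 * (of_bool (alive n \<omega>) - of_bool (alive (Suc n) \<omega>)) \<partial>M)"
    using integrable_alive_penalty integrable_alive by (intro integral_mono) auto
  then show ?thesis
    using integrable_alive_penalty integrable_alive by simp
qed

lemma expected_near_steps_le:
  "h\<^sup>2 * (\<Sum>n<K. \<integral>\<omega>. of_bool (alive n \<omega> \<and> \<not> far (X n \<omega>)) \<partial>M)
     \<le> 36 * \<delta>\<^sup>2 + 152 * exp 1 * \<delta>\<^sup>2 * h\<^sup>2 * real K"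
proof -
  define V where "V n = (\<integral>\<omega>. of_bool (alive n \<omega>) * penalty (X n \<omega>) \<partial>M)" for n
  define q where "q n = (\<integral>\<omega>. (of_bool (alive n \<omega>) :: real) \<partial>M)" for n
  have "h\<^sup>2 * (\<integral>\<omega>. of_bool (alive n \<omega> \<and> \<not> far (X n \<omega>)) \<partial>M)
      \<le> (V (Suc n) - V n) + 18 * \<delta>\<^sup>2 * (q n - q (Suc n)) + 152 * exp 1 * \<delta>\<^sup>2 * h\<^sup>2" for n
    using penalty_drift[of n] penalty_death[of n] unfolding V_def q_def by linarith
  then have "h\<^sup>2 * (\<Sum>n<K. \<integral>\<omega>. of_bool (alive n \<omega> \<and> \<not> far (X n \<omega>)) \<partial>M)
      \<le> (\<Sum>n<K. (V (Suc n) - V n) + 18 * \<delta>\<^sup>2 * (q n - q (Suc n)) + 152 * exp 1 * \<delta>\<^sup>2 * h\<^sup>2)"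
    unfolding sum_distrib_left by (intro sum_mono)
  also have "\<dots> = (V K - V 0) + 18 * \<delta>\<^sup>2 * (q 0 - q K) + 152 * exp 1 * \<delta>\<^sup>2 * h\<^sup>2 * real K"
    by (simp add: sum.distrib sum_lessThan_telescope sum_lessThan_telescope' flip: sum_distrib_left)
  also have "\<dots> \<le> 36 * \<delta>\<^sup>2 + 152 * exp 1 * \<delta>\<^sup>2 * h\<^sup>2 * real K"
  proof -
    have "V K \<le> (\<integral>\<omega>. 18 * \<delta>\<^sup>2 \<partial>M)"
      unfolding V_def using penalty_le penalty_nonneg
      by (intro integral_mono integrable_alive_penalty) (auto simp: of_bool_def)
    moreover have "0 \<le> V 0"
      unfolding V_def using penalty_nonneg by (intro Bochner_Integration.integral_nonneg) simp
    moreover have "q 0 \<le> (\<integral>\<omega>. 1 \<partial>M)"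
      unfolding q_def by (intro integral_mono integrable_alive) auto
    moreover have "0 \<le> q K"
      unfolding q_def by (intro Bochner_Integration.integral_nonneg) simp
    ultimately have "V K - V 0 \<le> 18 * \<delta>\<^sup>2" "q 0 - q K \<le> 1"
      by (simp_all add: prob_space)
    moreover have "18 * \<delta>\<^sup>2 * (q 0 - q K) \<le> 18 * \<delta>\<^sup>2 * 1"
      using \<open>q 0 - q K \<le> 1\<close> by (intro mult_left_mono) auto
    ultimately show ?thesis by linarith
  qed
  finally show ?thesis .
qed

definition "horizon = nat \<lceil>T / h\<^sup>2\<rceil> + 1"

lemma T_less_t_horizon: "T < t \<omega> horizon"
proof -
  have "T / h\<^sup>2 < real horizon"
    unfolding horizon_def by linarith
  then have "T < real horizon * h\<^sup>2"
    using h2_pos by (simp add: divide_less_eq)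
  also have "\<dots> \<le> t \<omega> horizon"
    by (rule t_ge)
  finally show ?thesis .
qed

lemma horizon_le: "real horizon \<le> T / h\<^sup>2 + 2"
proof -
  have "real (nat \<lceil>T / h\<^sup>2\<rceil>) = real_of_int \<lceil>T / h\<^sup>2\<rceil>"
    using T_pos h2_pos by simp
  then show ?thesis
    unfolding horizon_def using of_int_ceiling_le_add_one[of "T / h\<^sup>2"] by linarith
qed

lemma ex1_mesh_interval:
  assumes "0 \<le> s"
  shows "\<exists>!m. t \<omega> m \<le> s \<and> s < t \<omega> (Suc m)"
proof (rule ex_ex1I)
  obtain n :: nat where "s / h\<^sup>2 < real n"
    using reals_Archimedean2 by blast
  then have "s < t \<omega> n"
    using h2_pos t_ge[of n \<omega>] by (simp add: divide_less_eq)
  then show "\<exists>m. t \<omega> m \<le> s \<and> s < t \<omega> (Suc m)"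
    using exists_least_lemma[of "\<lambda>n. s < t \<omega> n"] assms by (auto simp: not_less)
next
  fix m m'
  have "t \<omega> m \<le> s \<Longrightarrow> s < t \<omega> (Suc m') \<Longrightarrow> m \<le> m'" for m m'
    using t_less_iff[of \<omega> m "Suc m'"] by simp
  then show "t \<omega> m \<le> s \<and> s < t \<omega> (Suc m) \<Longrightarrow> t \<omega> m' \<le> s \<and> s < t \<omega> (Suc m') \<Longrightarrow> m = m'"
    by (meson antisym)
qed

lemma Wbar_eq: "t \<omega> m \<le> s \<Longrightarrow> s < t \<omega> (Suc m) \<Longrightarrow> Wbar a b W h s \<omega> = X m \<omega>"
  unfolding Wbar_def X_def using ex1_mesh_interval[of s \<omega>] t_nonneg[of \<omega> m]
  by (subst the1_equality) auto

lemma inverse_step_Wbar: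
  assumes "0 \<le> s" "s < t \<omega> horizon"
  shows "1 / step a b h (Wbar a b W h s \<omega>)
     = (\<Sum>n<horizon. indicator {t \<omega> n..<t \<omega> (Suc n)} s / step a b h (X n \<omega>))"
proof -
  obtain m where m: "t \<omega> m \<le> s" "s < t \<omega> (Suc m)"
    using ex1_mesh_interval[OF assms(1)] by blast
  then have "m < horizon"
    using assms(2) t_less_iff by (meson le_less_trans)
  have "indicator {t \<omega> n..<t \<omega> (Suc n)} s / step a b h (X n \<omega>)
      = (if n = m then 1 / step a b h (X n \<omega>) else 0)" for n
    using ex1_mesh_interval[OF assms(1), of \<omega>] m by (auto simp: indicator_def)
  then show ?thesis
    using Wbar_eq[OF m] \<open>m < horizon\<close> by simp
qed

section \<open>The numerical exit time\<close>

lemma nu_first_exit: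
  assumes "X j \<omega> \<notin> {a<..<b}" and "\<forall>k<j. X k \<omega> \<in> {a<..<b}"
  shows "nu a b T W h \<omega> = min (t \<omega> j) T"
proof -
  have "X n \<omega> \<notin> {a<..<b} \<and> (\<forall>k<n. X k \<omega> \<in> {a<..<b}) \<longleftrightarrow> n = j" for n
  proof (cases n j rule: linorder_cases)
    case less
    then show ?thesis using assms(2) by auto
  next
    case greater
    then show ?thesis using assms(1) by auto
  qed (use assms in simp)
  then have "{t \<omega> n | n. X n \<omega> \<notin> {a<..<b} \<and> (\<forall>k<n. X k \<omega> \<in> {a<..<b})} = {t \<omega> j}"
    by simp
  moreover have "\<exists>n. X n \<omega> \<notin> {a<..<b}"
    using assms(1) by blast
  ultimately show ?thesis
    unfolding nu_def X_def[symmetric] by (simp only: if_True Min_singleton)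
qed

lemma nu_no_exit: "\<forall>n. X n \<omega> \<in> {a<..<b} \<Longrightarrow> nu a b T W h \<omega> = T"
  unfolding nu_def X_def[symmetric] by simp

lemma obtain_first_exit:
  assumes "X k \<omega> \<notin> {a<..<b}"
  obtains j where "j \<le> k" "X j \<omega> \<notin> {a<..<b}" "\<forall>i<j. X i \<omega> \<in> {a<..<b}"
proof
  let ?j = "LEAST j. X j \<omega> \<notin> {a<..<b}"
  show "?j \<le> k"
    using assms by (rule Least_le)
  show "X ?j \<omega> \<notin> {a<..<b}"
    using assms by (rule LeastI)
  show "\<forall>i<?j. X i \<omega> \<in> {a<..<b}"
    using not_less_Least by blast
qed

lemma nu_le_T: "nu a b T W h \<omega> \<le> T"
  unfolding nu_def by auto

lemma alive_before_nu:
  assumes "t \<omega> n < nu a b T W h \<omega>"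
  shows "alive n \<omega>"
proof (rule ccontr)
  assume "\<not> alive n \<omega>"
  then obtain k where "k \<le> n" "X k \<omega> \<notin> {a<..<b}"
    by (auto simp: alive_def)
  then obtain j where "j \<le> n" "X j \<omega> \<notin> {a<..<b}" "\<forall>i<j. X i \<omega> \<in> {a<..<b}"
    using obtain_first_exit order.trans by metis
  then have "nu a b T W h \<omega> = min (t \<omega> j) T" "t \<omega> j \<le> t \<omega> n"
    using nu_first_exit t_le_iff by simp_all
  with assms show False by linarith
qed

definition "exit_candidate n \<omega> = (if X n \<omega> \<in> {a<..<b} then T else min T (t \<omega> n))"

lemma exit_candidate_measurable[measurable]: "exit_candidate n \<in> borel_measurable M"
  unfolding exit_candidate_def[abs_def] by measurable

text \<open>Exits after the horizon happen after \<open>T\<close>, so finitely many candidates suffice.\<close>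

lemma nu_eq_Min:
  assumes "\<omega> \<in> space M"
  shows "nu a b T W h \<omega> = Min ((\<lambda>n. exit_candidate n \<omega>) ` {..horizon})"
proof (cases "\<exists>k. X k \<omega> \<notin> {a<..<b}")
  case True
  then obtain j where j: "X j \<omega> \<notin> {a<..<b}" "\<forall>i<j. X i \<omega> \<in> {a<..<b}"
    by (metis obtain_first_exit)
  have "X 0 \<omega> \<in> {a<..<b}"
    using X_0[OF assms] a_neg b_pos by simp
  have "min (t \<omega> j) T \<in> (\<lambda>n. exit_candidate n \<omega>) ` {..horizon}"
  proof (cases "j \<le> horizon")
    case True
    then show ?thesis using j by (force simp: exit_candidate_def)
  next
    case False
    then have "T < t \<omega> j"
      using T_less_t_horizon[of \<omega>] t_le_iff[of \<omega> horizon j] by simp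
    then show ?thesis
      using \<open>X 0 \<omega> \<in> {a<..<b}\<close> by (force simp: exit_candidate_def)
  qed
  moreover have "min (t \<omega> j) T \<le> exit_candidate n \<omega>" for n
    using j t_le_iff[of \<omega> j n] by (cases "n < j") (auto simp: exit_candidate_def)
  ultimately show ?thesis
    using nu_first_exit[OF j] by (intro Min_eqI[symmetric]) auto
next
  case False
  then show ?thesis
    using nu_no_exit[of \<omega>] by (simp add: exit_candidate_def image_constant_conv)
qed

lemma nu_measurable[measurable]: "(\<lambda>\<omega>. nu a b T W h \<omega>) \<in> borel_measurable M"
proof -
  have "(\<lambda>\<omega>. Min ((\<lambda>n. exit_candidate n \<omega>) ` {..horizon})) \<in> borel_measurable M"
    by (rule borel_measurable_Min) auto
  then show ?thesis
    by (rule measurable_cong[THEN iffD1, rotated]) (simp add: nu_eq_Min)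
qed

lemma nu_nonneg: "\<omega> \<in> space M \<Longrightarrow> 0 \<le> nu a b T W h \<omega>"
  unfolding nu_eq_Min using T_pos t_nonneg by (intro Min.boundedI) (auto simp: exit_candidate_def)

section \<open>The expected cost\<close>

lemma cost_eq_sum:
  assumes "\<omega> \<in> space M"
  shows "cost a b T W h \<omega>
    = (\<Sum>n<horizon. max 0 (min (nu a b T W h \<omega>) (t \<omega> (Suc n)) - t \<omega> n) / step a b h (X n \<omega>))"
proof -
  let ?u = "nu a b T W h \<omega>"
  let ?I = "\<lambda>n. {0..?u} \<inter> {t \<omega> n..<t \<omega> (Suc n)}"
  have "0 \<le> ?u" using nu_nonneg[OF assms] .
  have "cost a b T W h \<omega>
      = (LINT s:{0..?u}|lborel. (\<Sum>n<horizon. indicator {t \<omega> n..<t \<omega> (Suc n)} s / step a b h (X n \<omega>)))"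
    unfolding cost_def
  proof (intro set_lebesgue_integral_cong allI impI)
    fix s assume "s \<in> {0..?u}"
    moreover have "?u < t \<omega> horizon"
      using nu_le_T[of \<omega>] T_less_t_horizon[of \<omega>] by linarith
    ultimately show "1 / step a b h (Wbar a b W h s \<omega>)
        = (\<Sum>n<horizon. indicator {t \<omega> n..<t \<omega> (Suc n)} s / step a b h (X n \<omega>))"
      by (intro inverse_step_Wbar) auto
  qed simp
  also have "\<dots> = (\<integral>s. (\<Sum>n<horizon. indicator (?I n) s / step a b h (X n \<omega>)) \<partial>lborel)"
    unfolding set_lebesgue_integral_def
    by (rule Bochner_Integration.integral_cong) (auto simp: sum_distrib_left indicator_def)
  also have "\<dots> = (\<Sum>n<horizon. measure lborel (?I n) / step a b h (X n \<omega>))"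
  proof -
    have "emeasure lborel (?I n) < \<infinity>" for n
      by (rule emeasure_bounded_finite) (auto intro: bounded_subset[OF bounded_closed_interval])
    then have "integrable lborel (indicator (?I n) :: real \<Rightarrow> real)" for n
      by (intro integrable_real_indicator) auto
    then show ?thesis by (simp add: Bochner_Integration.integral_sum)
  qed
  also have "\<dots> = (\<Sum>n<horizon. max 0 (min ?u (t \<omega> (Suc n)) - t \<omega> n) / step a b h (X n \<omega>))"
    using measure_Icc_inter_Ico t_nonneg t_le_iff \<open>0 \<le> ?u\<close> by simp
  finally show ?thesis .
qed

lemma cost_term_le:
  "max 0 (min (nu a b T W h \<omega>) (t \<omega> (Suc n)) - t \<omega> n) / step a b h (X n \<omega>)
     \<le> of_bool (alive n \<omega> \<and> \<not> far (X n \<omega>)) + of_bool (t \<omega> n < T \<and> far (X n \<omega>))"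
proof (cases "t \<omega> n < nu a b T W h \<omega>")
  case True
  have "max 0 (min (nu a b T W h \<omega>) (t \<omega> (Suc n)) - t \<omega> n) \<le> step a b h (X n \<omega>)"
    using t_Suc[of \<omega> n] step_pos[of "X n \<omega>"] min.cobounded2[of "nu a b T W h \<omega>" "t \<omega> (Suc n)"]
    by simp
  then have "max 0 (min (nu a b T W h \<omega>) (t \<omega> (Suc n)) - t \<omega> n) / step a b h (X n \<omega>) \<le> 1"
    using step_pos by simp
  moreover have "alive n \<omega>" "t \<omega> n < T"
    using alive_before_nu[OF True] True nu_le_T[of \<omega>] by auto
  ultimately show ?thesis by auto
qed simp

text \<open>Long steps advance the mesh by \<open>h\<close>, so at most \<open>T/h + 1\<close> of them start before \<open>T\<close>.\<close>

lemma far_steps_before_T: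
  "h * (\<Sum>n<N. of_bool (t \<omega> n < T \<and> far (X n \<omega>))) \<le> T + h"
proof -
  have far_steps: "h * (\<Sum>n<N. of_bool (far (X n \<omega>))) \<le> t \<omega> N" for N
  proof (induction N)
    case (Suc N)
    then show ?case
      using t_Suc[of \<omega> N] h_pos h2_pos
      by (cases "far (X N \<omega>)") (simp_all del: sum_of_bool_eq add: step_eq distrib_left add_increasing2)
  qed simp
  show ?thesis
  proof (induction N)
    case (Suc N)
    show ?case
    proof (cases "t \<omega> N < T \<and> far (X N \<omega>)")
      case True
      have "(\<Sum>n<N. of_bool (t \<omega> n < T \<and> far (X n \<omega>))) \<le> (\<Sum>n<N. of_bool (far (X n \<omega>)) :: real)"
        by (intro sum_mono) auto
      then have "h * (\<Sum>n<N. of_bool (t \<omega> n < T \<and> far (X n \<omega>))) \<le> t \<omega> N"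
        using far_steps[of N] h_pos by (meson mult_left_mono order.trans less_imp_le)
      then show ?thesis using True by (simp del: sum_of_bool_eq add: distrib_left)
    qed (use Suc in \<open>auto simp del: sum_of_bool_eq\<close>)
  qed (use T_pos h_pos in simp)
qed

lemma cost_nonneg: "\<omega> \<in> space M \<Longrightarrow> 0 \<le> cost a b T W h \<omega>"
  unfolding cost_eq_sum using step_pos by (intro sum_nonneg) (simp add: less_imp_le)

lemma cost_le:
  assumes "\<omega> \<in> space M"
  shows "cost a b T W h \<omega> \<le> (\<Sum>n<horizon. of_bool (alive n \<omega> \<and> \<not> far (X n \<omega>))) + (T + h) / h"
proof -
  have "(\<Sum>n<horizon. max 0 (min (nu a b T W h \<omega>) (t \<omega> (Suc n)) - t \<omega> n) / step a b h (X n \<omega>))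
    \<le> (\<Sum>n<horizon. of_bool (alive n \<omega> \<and> \<not> far (X n \<omega>)) + of_bool (t \<omega> n < T \<and> far (X n \<omega>)))"
    by (intro sum_mono cost_term_le)
  moreover have "(\<Sum>n<horizon. of_bool (t \<omega> n < T \<and> far (X n \<omega>))) \<le> (T + h) / h"
    using far_steps_before_T[where N=horizon and \<omega>=\<omega>] h_pos by (simp del: sum_of_bool_eq add: le_divide_eq mult.commute)
  ultimately show ?thesis
    unfolding cost_eq_sum[OF assms] by (simp del: sum_of_bool_eq add: sum.distrib)
qed

lemma cost_measurable: "cost a b T W h \<in> borel_measurable M"
proof -
  have "(\<lambda>\<omega>. \<Sum>n<horizon. max 0 (min (nu a b T W h \<omega>) (t \<omega> (Suc n)) - t \<omega> n) / step a b h (X n \<omega>))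
      \<in> borel_measurable M"
    by measurable
  then show ?thesis
    by (rule measurable_cong[THEN iffD1, rotated]) (simp add: cost_eq_sum)
qed

lemma cost_integrable: "integrable M (cost a b T W h)"
proof (rule integrable_bounded[OF cost_measurable])
  fix \<omega> assume "\<omega> \<in> space M"
  have "(\<Sum>n<horizon. of_bool (alive n \<omega> \<and> \<not> far (X n \<omega>))) \<le> (\<Sum>n<horizon. 1 :: real)"
    by (intro sum_mono) auto
  then show "\<bar>cost a b T W h \<omega>\<bar> \<le> real horizon + (T + h) / h"
    using cost_le[OF \<open>\<omega> \<in> space M\<close>] cost_nonneg[OF \<open>\<omega> \<in> space M\<close>] by simp
qed

lemma expected_cost_le:
  "(\<integral>\<omega>. cost a b T W h \<omega> \<partial>M) \<le> (36 * \<delta>\<^sup>2 + 152 * exp 1 * \<delta>\<^sup>2 * h\<^sup>2 * real horizon) / h\<^sup>2 + (T + h) / h"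
proof -
  have integrable: "integrable M (\<lambda>\<omega>. of_bool (alive n \<omega> \<and> \<not> far (X n \<omega>)) :: real)" for n
    by (rule integrable_bounded[where B=1]) auto
  have "integrable M (\<lambda>\<omega>. (\<Sum>n<horizon. of_bool (alive n \<omega> \<and> \<not> far (X n \<omega>))) + (T + h) / h)"
    by (intro Bochner_Integration.integrable_add Bochner_Integration.integrable_sum integrable) simp
  then have "(\<integral>\<omega>. cost a b T W h \<omega> \<partial>M)
      \<le> (\<integral>\<omega>. (\<Sum>n<horizon. of_bool (alive n \<omega> \<and> \<not> far (X n \<omega>))) + (T + h) / h \<partial>M)"
    by (intro integral_mono[OF cost_integrable] cost_le)
  also have "\<dots> = (\<Sum>n<horizon. \<integral>\<omega>. of_bool (alive n \<omega> \<and> \<not> far (X n \<omega>)) \<partial>M) + (T + h) / h"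
    using integrable
    by (simp del: sum_of_bool_eq add: Bochner_Integration.integral_add Bochner_Integration.integrable_sum
        Bochner_Integration.integral_sum prob_space)
  also have "(\<Sum>n<horizon. \<integral>\<omega>. of_bool (alive n \<omega> \<and> \<not> far (X n \<omega>)) \<partial>M)
      \<le> (36 * \<delta>\<^sup>2 + 152 * exp 1 * \<delta>\<^sup>2 * h\<^sup>2 * real horizon) / h\<^sup>2"
    using expected_near_steps_le[of horizon] h2_pos by (simp add: le_divide_eq mult.commute)
  finally show ?thesis by simp
qed

lemma expected_cost_le_log:
  "(\<integral>\<omega>. cost a b T W h \<omega> \<partial>M) \<le> (144 + 608 * exp 1 * (T + 2) + T + 1) * (ln (1/h) / h)"
proof -
  define L where "L = ln (1/h)"
  have "1 \<le> L" "h < 1" "0 < h"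
    using one_le_ln_inv_h h_less_1 h_pos by (simp_all add: L_def)
  have \<delta>_sq: "\<delta>\<^sup>2 = 4 * h * L"
    using delta_sq by (simp add: L_def)
  have near: "36 * \<delta>\<^sup>2 / h\<^sup>2 = 144 * (L / h)"
    unfolding \<delta>_sq using \<open>0 < h\<close> by (simp add: power2_eq_square field_simps)
  have "152 * exp 1 * \<delta>\<^sup>2 * h\<^sup>2 * real horizon / h\<^sup>2 = 608 * exp 1 * L * h * real horizon"
    unfolding \<delta>_sq using \<open>0 < h\<close> by (simp add: power2_eq_square field_simps)
  also have "\<dots> \<le> 608 * exp 1 * L * h * (T / h\<^sup>2 + 2)"
    using horizon_le \<open>0 < h\<close> \<open>1 \<le> L\<close> by (intro mult_left_mono) auto
  also have "\<dots> = 608 * exp 1 * (T + 2 * h\<^sup>2) * (L / h)"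
    using \<open>0 < h\<close> by (simp add: power2_eq_square field_simps)
  also have "\<dots> \<le> 608 * exp 1 * (T + 2) * (L / h)"
    using \<open>0 < h\<close> \<open>h < 1\<close> \<open>1 \<le> L\<close> h2_le_h by (intro mult_right_mono mult_left_mono) auto
  finally have jumps: "152 * exp 1 * \<delta>\<^sup>2 * h\<^sup>2 * real horizon / h\<^sup>2 \<le> 608 * exp 1 * (T + 2) * (L / h)" .
  have "T + 1 \<le> (T + 1) * L"
    using T_pos \<open>1 \<le> L\<close> by simp
  then have "(T + h) / h \<le> (T + 1) * L / h"
    using \<open>0 < h\<close> \<open>h < 1\<close> by (intro divide_right_mono) auto
  then have far: "(T + h) / h \<le> (T + 1) * (L / h)"
    by simp
  have "(\<integral>\<omega>. cost a b T W h \<omega> \<partial>M)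
      \<le> 36 * \<delta>\<^sup>2 / h\<^sup>2 + 152 * exp 1 * \<delta>\<^sup>2 * h\<^sup>2 * real horizon / h\<^sup>2 + (T + h) / h"
    using expected_cost_le by (simp add: add_divide_distrib)
  also have "\<dots> \<le> 144 * (L / h) + 608 * exp 1 * (T + 2) * (L / h) + (T + 1) * (L / h)"
    using near jumps far by linarith
  also have "\<dots> = (144 + 608 * exp 1 * (T + 2) + T + 1) * (L / h)"
    using \<open>0 < h\<close> by (simp add: field_simps)
  finally show ?thesis unfolding L_def .
qed

lemma norm_expected_cost_le:
  "norm (\<integral>\<omega>. cost a b T W h \<omega> \<partial>M) \<le> (144 + 608 * exp 1 * (T + 2) + T + 1) * norm (\<bar>ln h\<bar> / h)"
proof -
  have "0 \<le> (\<integral>\<omega>. cost a b T W h \<omega> \<partial>M)"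
    using cost_nonneg by (intro Bochner_Integration.integral_nonneg) auto
  moreover have "norm (\<bar>ln h\<bar> / h) = ln (1/h) / h"
    using h_pos h_less_1 by (simp add: ln_div)
  ultimately show ?thesis
    using expected_cost_le_log by simp
qed

end

section \<open>The density of the running maximum\<close>

lemma rho_bdd_above:
  assumes "0 < h" and "h \<le> 1" and "0 < b"
  shows "bdd_above ((\<lambda>(t, w, m). rho t w m) ` ({h..T} \<times> {b - delta h..<b} \<times> {b - delta h..b + delta h}))"
proof (rule bdd_aboveI2)
  have "0 \<le> delta h"
    unfolding delta_def using assms by simp
  fix x assume "x \<in> {h..T} \<times> {b - delta h..<b} \<times> {b - delta h..b + delta h}"
  then obtain t w m where x: "x = (t, w, m)" and "h \<le> t" "b - delta h \<le> w" "w < b"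
    and "b - delta h \<le> m" "m \<le> b + delta h" by auto
  have "h powr (3/2) \<le> t powr (3/2)"
    using \<open>h \<le> t\<close> assms by (intro powr_mono2) auto
  have "rho t w m \<le> sqrt (2 / pi) * (b + 3 * delta h) / h powr (3/2)"
  proof (cases "0 \<le> m \<and> w \<le> m")
    case True
    have "0 \<le> 2 * m - w" "2 * m - w \<le> b + 3 * delta h"
      using True \<open>b - delta h \<le> w\<close> \<open>m \<le> b + delta h\<close> by auto
    have "rho t w m = sqrt (2 / pi) * (2 * m - w) / t powr (3/2) * exp (- ((2 * m - w)\<^sup>2) / (2 * t))"
      using True by (simp add: rho_def)
    also have "\<dots> \<le> sqrt (2 / pi) * (2 * m - w) / t powr (3/2) * 1"
      using \<open>0 \<le> 2 * m - w\<close> \<open>h \<le> t\<close> assms by (intro mult_left_mono) auto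
    also have "\<dots> \<le> sqrt (2 / pi) * (2 * m - w) / h powr (3/2)"
      using \<open>0 \<le> 2 * m - w\<close> \<open>h powr (3/2) \<le> t powr (3/2)\<close> assms
      by (simp, intro divide_left_mono mult_nonneg_nonneg mult_pos_pos) auto
    also have "\<dots> \<le> sqrt (2 / pi) * (b + 3 * delta h) / h powr (3/2)"
      using \<open>2 * m - w \<le> b + 3 * delta h\<close> assms by (intro divide_right_mono mult_left_mono) auto
    finally show ?thesis .
  next
    case False
    then have "rho t w m = 0"
      unfolding rho_def by (rule if_not_P)
    then show ?thesis
      using \<open>0 \<le> delta h\<close> assms by simp
  qed
  then show "(case x of (t, w, m) \<Rightarrow> rho t w m) \<le> sqrt (2 / pi) * (b + 3 * delta h) / h powr (3/2)"
    using x by simp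
qed

section \<open>Asymptotics as \<open>h \<rightarrow> 0\<close>\<close>

lemma eventually_adaptive_scheme:
  assumes "wiener_process M W" and "a < 0" and "0 < b" and "0 < T"
  shows "\<forall>\<^sub>F h in at_right 0. adaptive_scheme M W a b T h"
proof -
  have "\<forall>\<^sub>F h in at_right (0::real). 0 < h \<and> h < exp (-1)"
    unfolding eventually_at_right_field by (intro exI[of _ "exp (-1)"]) auto
  then show ?thesis
    by (rule eventually_mono)
      (use assms in \<open>auto simp: adaptive_scheme_def adaptive_scheme_axioms_def wiener_space_def\<close>)
qed

theorem mainTheorem9:
  fixes M :: "'a measure" and W :: "real \<Rightarrow> 'a \<Rightarrow> real" and a b T :: real
  assumes "wiener_process M W" and "a < 0" and "0 < b" and "0 < T"
  shows "(\<forall>\<^sub>F h in at_right 0.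
            bdd_above ((\<lambda>(t, w, m). rho t w m) `
              ({h..T} \<times> {b - delta h..<b} \<times> {b - delta h..b + delta h})))
       \<and> (\<forall>\<^sub>F h in at_right 0. integrable M (cost a b T W h))
       \<and> (\<lambda>h. integral\<^sup>L M (cost a b T W h)) \<in> O[at_right 0](\<lambda>h. \<bar>ln h\<bar> / h)"
proof (intro conjI)
  have scheme: "\<forall>\<^sub>F h in at_right 0. adaptive_scheme M W a b T h"
    using assms by (rule eventually_adaptive_scheme)
  show "\<forall>\<^sub>F h in at_right 0.
      bdd_above ((\<lambda>(t, w, m). rho t w m) ` ({h..T} \<times> {b - delta h..<b} \<times> {b - delta h..b + delta h}))"
    using scheme
  proof (rule eventually_mono)
    fix h assume "adaptive_scheme M W a b T h"
    then interpret adaptive_scheme M W a b T h .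
    show "bdd_above ((\<lambda>(t, w, m). rho t w m) ` ({h..T} \<times> {b - \<delta>..<b} \<times> {b - \<delta>..b + \<delta>}))"
      using h_pos h_less_1 b_pos by (intro rho_bdd_above) auto
  qed
  show "\<forall>\<^sub>F h in at_right 0. integrable M (cost a b T W h)"
    using scheme by (rule eventually_mono) (rule adaptive_scheme.cost_integrable)
  have "\<forall>\<^sub>F h in at_right 0. norm (integral\<^sup>L M (cost a b T W h))
      \<le> (144 + 608 * exp 1 * (T + 2) + T + 1) * norm (\<bar>ln h\<bar> / h)"
    using scheme by (rule eventually_mono) (rule adaptive_scheme.norm_expected_cost_le)
  then show "(\<lambda>h. integral\<^sup>L M (cost a b T W h)) \<in> O[at_right 0](\<lambda>h. \<bar>ln h\<bar> / h)"
    by (rule bigoI)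
qed

end
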